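(* Let $E$ be a locally compact Polish space and let $T$ be a $\mathcal{C}_b$-semigroup of kernel operators on $\mathcal{B}_b(E)$ of type $(M,\omega)$ consisting of strong Feller operators, with full generator $\hat A$ and Laplace transform $(R(\lambda))_{\operatorname{Re}\lambda>\omega}$. Let $\hat B$ and $\hat B_n$, $n\in\mathds{N}$, be single-valued linear operators on $\mathcal{B}_b(E)$ with $D(\hat A)$ contained in their domains, each of which satisfies: (i) for every $t>0$, the operator ($\hat B$ resp. $\hat B_n$)$\,T(t)$ defined on $D(\hat A)$ extends to a kernel operator on $\mathcal{B}_b(E)$; (ii) ($\hat B$ resp. $\hat B_n$)$\,R(\lambda)$ is a kernel operator for all $\lambda>\omega$; (iii) $(t,x)\mapsto$ ($\hat B$ resp. $\hat B_n$)$\,T(t)f(x)$ is measurable for $f\in\mathcal{B}_b(E)$; (iv) its operator norm is bounded by a function $\varphi(t)$ integrable near $0$. Assume moreover: (1) $\sup_{n\in\mathds{N}}\|\hat B_nR(\lambda)\|\to0$ as $\lambda\to\infty$; (2) for every $h\in\mathcal{B}_b(E)$ and large enough $\lambda$, $\hat B_nR(\lambda)h\rightharpoonup\hat BR(\lambda)h$; (3) whenever $(h_n)\subset\mathcal{B}_b(E)$ satisfies $h_n\rightharpoonup0$, then $\hat B_nR(\lambda)h_n\rightharpoonup0$ for large enough $\lambda$. Then for all sufficiently large $\lambda$ and all $f\in\mathcal{B}_b(E)$, \[(\lambda-(\hat A+\hat B_n))^{-1}f\rightharpoonup(\lambda-(\hat A+\hat B))^{-1}f.\]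
   Context: Notation as follows. Kernel operator: $Tf(x)=\int f(y)k(x,dy)$ with a bounded kernel ($x\mapsto k(x,B)$ measurable, $k(x,\cdot)$ signed measure, $\sup_x|k|(x,E)<\infty$). Semigroup of kernel operators of type $(M,\omega)$: kernel operators $T(t)$, $t>0$, with $T(t+s)=T(t)T(s)$, $\|T(t)\|\le Me^{\omega t}$, $(t,x)\mapsto T(t)f(x)$ measurable. $R(\lambda)f(x)=\int_0^\infty e^{-\lambda t}T(t)f(x)dt$. Full generator $\hat A=\{(f,g):T(t)f-f=\int_0^tT(s)g\,ds\ \forall t>0\}$ (a multivalued operator with $R(\lambda)=(\lambda-\hat A)^{-1}$). $\mathcal{C}_b$-semigroup: leaves bounded continuous functions invariant and $T(t)f\to f$ boundedly pointwise as $t\to 0$ for such $f$. Strong Feller: maps $\mathcal{B}_b(E)$ into bounded continuous functions. $\hat A+\hat B=\{(u,f+\hat Bu):(u,f)\in\hat A\}$ and $(\lambda-(\hat A+\hat B))^{-1}$ is the inverse of the multivalued operator $\lambda-(\hat A+\hat B)$. $h_n\rightharpoonup h$ means convergence in $\sigma(\mathcal{B}_b(E),\mathcal{M}_b(E))$, i.e. $\int h_n\,d\mu\to\int h\,d\mu$ for every bounded signed measure $\mu$; for sequences this is equivalent to $\sup_n\|h_n\|_\infty<\infty$ and pointwise convergence. *)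

theory Defs
  imports "HOL-Analysis.Analysis"
begin

text \<open>Operators on B_b(E) are modelled as maps (E \<Rightarrow> real) \<Rightarrow> (E \<Rightarrow> real);
  only their values on bounded Borel functions matter.\<close>

definition Bb :: "('a::topological_space \<Rightarrow> real) set" where
  "Bb = {f. f \<in> borel_measurable borel \<and> bounded (range f)}"

definition Cb :: "('a::topological_space \<Rightarrow> real) \<Rightarrow> bool" where
  "Cb f \<longleftrightarrow> continuous_on UNIV f \<and> bounded (range f)"

definition supn :: "('a \<Rightarrow> real) \<Rightarrow> real" where
  "supn f = (SUP x. \<bar>f x\<bar>)"

definition op_bound ::
  "(('a::topological_space \<Rightarrow> real) \<Rightarrow> ('a \<Rightarrow> real)) \<Rightarrow> real \<Rightarrow> bool" where
  "op_bound K c \<longleftrightarrow> (\<forall>f\<in>Bb. \<forall>x. \<bar>K f x\<bar> \<le> c * supn f)"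

text \<open>Kernel operator with a bounded signed kernel k = kp - km (Jordan-type decomposition
  into two bounded finite measure kernels).\<close>
definition kernel_op ::
  "(('a::topological_space \<Rightarrow> real) \<Rightarrow> ('a \<Rightarrow> real)) \<Rightarrow> bool" where
  "kernel_op K \<longleftrightarrow> (\<exists>kp km :: 'a \<Rightarrow> 'a measure.
     (\<forall>x. sets (kp x) = sets borel \<and> sets (km x) = sets borel
          \<and> finite_measure (kp x) \<and> finite_measure (km x)) \<and>
     (\<forall>B\<in>sets borel. (\<lambda>x. measure (kp x) B) \<in> borel_measurable borel
          \<and> (\<lambda>x. measure (km x) B) \<in> borel_measurable borel) \<and>
     (\<exists>C. \<forall>x. measure (kp x) UNIV + measure (km x) UNIV \<le> C) \<and>
     (\<forall>f\<in>Bb. \<forall>x. K f x = integral\<^sup>L (kp x) f - integral\<^sup>L (km x) f))"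

definition kernel_semigroup ::
  "real \<Rightarrow> real \<Rightarrow> (real \<Rightarrow> ('a::topological_space \<Rightarrow> real) \<Rightarrow> ('a \<Rightarrow> real)) \<Rightarrow> bool" where
  "kernel_semigroup M \<omega> T \<longleftrightarrow>
     (\<forall>t>0. kernel_op (T t)) \<and>
     (\<forall>t>0. \<forall>s>0. \<forall>f\<in>Bb. T (t + s) f = T t (T s f)) \<and>
     (\<forall>t>0. op_bound (T t) (M * exp (\<omega> * t))) \<and>
     (\<forall>f\<in>Bb. (\<lambda>p. T (fst p) f (snd p))
        \<in> borel_measurable (restrict_space (borel :: (real \<times> 'a) measure) ({0<..} \<times> UNIV)))"

definition Cb_semigroup ::
  "(real \<Rightarrow> ('a::topological_space \<Rightarrow> real) \<Rightarrow> ('a \<Rightarrow> real)) \<Rightarrow> bool" where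
  "Cb_semigroup T \<longleftrightarrow> (\<forall>f. Cb f \<longrightarrow>
     (\<forall>t>0. Cb (T t f)) \<and>
     (\<exists>\<delta>>0. \<exists>C. \<forall>t\<in>{0<..<\<delta>}. \<forall>x. \<bar>T t f x\<bar> \<le> C) \<and>
     (\<forall>x. ((\<lambda>t. T t f x) \<longlongrightarrow> f x) (at_right 0)))"

definition strong_Feller_semigroup ::
  "(real \<Rightarrow> ('a::topological_space \<Rightarrow> real) \<Rightarrow> ('a \<Rightarrow> real)) \<Rightarrow> bool" where
  "strong_Feller_semigroup T \<longleftrightarrow> (\<forall>t>0. \<forall>f\<in>Bb. Cb (T t f))"

definition laplace ::
  "(real \<Rightarrow> ('a::topological_space \<Rightarrow> real) \<Rightarrow> ('a \<Rightarrow> real)) \<Rightarrow> real \<Rightarrow> ('a \<Rightarrow> real) \<Rightarrow> ('a \<Rightarrow> real)" where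
  "laplace T l f = (\<lambda>x. LINT t:{0<..}|lborel. exp (- l * t) * T t f x)"

definition full_gen ::
  "(real \<Rightarrow> ('a::topological_space \<Rightarrow> real) \<Rightarrow> ('a \<Rightarrow> real)) \<Rightarrow> (('a \<Rightarrow> real) \<times> ('a \<Rightarrow> real)) set" where
  "full_gen T = {(f, g). f \<in> Bb \<and> g \<in> Bb \<and>
     (\<forall>t>0. \<forall>x. T t f x - f x = (LINT s:{0<..t}|lborel. T s g x))}"

definition admissible_pert ::
  "(real \<Rightarrow> ('a::topological_space \<Rightarrow> real) \<Rightarrow> ('a \<Rightarrow> real)) \<Rightarrow> real \<Rightarrow>
   ('a \<Rightarrow> real) set \<Rightarrow> (('a \<Rightarrow> real) \<Rightarrow> ('a \<Rightarrow> real)) \<Rightarrow> bool" where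
  "admissible_pert T \<omega> DB B \<longleftrightarrow>
     DB \<subseteq> Bb \<and> Domain (full_gen T) \<subseteq> DB \<and> (\<forall>f\<in>DB. B f \<in> Bb) \<and>
     (\<forall>f\<in>DB. \<forall>g\<in>DB. \<forall>a::real.
        (\<lambda>x. f x + g x) \<in> DB \<and> (\<lambda>x. a * f x) \<in> DB \<and>
        B (\<lambda>x. f x + g x) = (\<lambda>x. B f x + B g x) \<and> B (\<lambda>x. a * f x) = (\<lambda>x. a * B f x)) \<and>
     (\<exists>BT :: real \<Rightarrow> ('a \<Rightarrow> real) \<Rightarrow> ('a \<Rightarrow> real).
        (\<forall>t>0. kernel_op (BT t) \<and> (\<forall>f\<in>Domain (full_gen T). BT t f = B (T t f))) \<and>
        (\<forall>f\<in>Bb. (\<lambda>p. BT (fst p) f (snd p))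
           \<in> borel_measurable (restrict_space (borel :: (real \<times> 'a) measure) ({0<..} \<times> UNIV))) \<and>
        (\<exists>\<phi> \<delta>. \<delta> > 0 \<and> set_integrable lborel {0<..\<delta>} (\<phi> :: real \<Rightarrow> real) \<and>
           (\<forall>t>0. op_bound (BT t) (\<phi> t)))) \<and>
     (\<forall>l>\<omega>. kernel_op (\<lambda>f. B (laplace T l f)))"

text \<open>(\<lambda> - (A + B))^{-1} as a relation of pairs (f, u), for A multivalued, B single-valued:
  A + B = {(u, g + B u) | (u,g) \<in> A}.\<close>
definition pert_res_rel ::
  "(('a \<Rightarrow> real) \<times> ('a \<Rightarrow> real)) set \<Rightarrow> (('a \<Rightarrow> real) \<Rightarrow> ('a \<Rightarrow> real)) \<Rightarrow> real
   \<Rightarrow> (('a \<Rightarrow> real) \<times> ('a \<Rightarrow> real)) set" where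
  "pert_res_rel A B l = {((\<lambda>x. l * u x - (g x + B u x)), u) | u g. (u, g) \<in> A}"

definition pert_res ::
  "(('a \<Rightarrow> real) \<times> ('a \<Rightarrow> real)) set \<Rightarrow> (('a \<Rightarrow> real) \<Rightarrow> ('a \<Rightarrow> real)) \<Rightarrow> real
   \<Rightarrow> ('a \<Rightarrow> real) \<Rightarrow> ('a \<Rightarrow> real)" where
  "pert_res A B l f = (THE u. (f, u) \<in> pert_res_rel A B l)"

text \<open>convergence in \<sigma>(B_b, M_b) for sequences: uniformly bounded + pointwise\<close>
definition wconv :: "(nat \<Rightarrow> 'a \<Rightarrow> real) \<Rightarrow> ('a \<Rightarrow> real) \<Rightarrow> bool" where
  "wconv hs h \<longleftrightarrow> (\<exists>C. \<forall>n x. \<bar>hs n x\<bar> \<le> C) \<and> (\<forall>x. (\<lambda>n. hs n x) \<longlonglongrightarrow> h x)"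

end

theory Submission
  imports Defs
begin

text \<open>
  Since (u, g) lies in the full generator exactly when u = R(\<lambda>) (\<lambda> u - g), writing
  u = R(\<lambda>) v turns (\<lambda> - (A + B)) u = f into the fixed point equation v = f + B R(\<lambda>) v.
  By (1), for large \<lambda> every Bn R(\<lambda>) is a kernel operator of norm at most 1/2, and by (2) so
  is its pointwise limit B R(\<lambda>); hence both fixed point equations have unique bounded solutions
  vn and v. The differences wn = vn - v satisfy wn = en + Bn R(\<lambda>) wn, where
  en = Bn R(\<lambda>) v - B R(\<lambda>) v tends to 0 boundedly by (2). Unrolling this equation K times,
  the first K terms tend to 0 by (3) and the remainder is at most 2^(-K) sup |wn|, so vn converges
  to v boundedly pointwise, and R(\<lambda>) preserves such convergence by dominated convergence.
\<close>

section \<open>Integrals over half-lines\<close>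

lemma indicator_Ici_Ioi_AE:
  fixes g :: "real \<Rightarrow> real"
  shows "AE r in lborel. indicator {s..} r * g r = indicator {s<..} r * g r"
  using AE_lborel_singleton[of s] by eventually_elim (auto simp: indicator_def)

lemma
  fixes g :: "real \<Rightarrow> real"
  assumes [measurable]: "g \<in> borel_measurable borel"
  shows integral_indicator_Ici_Ioi:
      "(\<integral>r. indicator {s..} r * g r \<partial>lborel) = (\<integral>r. indicator {s<..} r * g r \<partial>lborel)"
    and integrable_indicator_Ici_Ioi_iff:
      "integrable lborel (\<lambda>r. indicator {s..} r * g r) \<longleftrightarrow> integrable lborel (\<lambda>r. indicator {s<..} r * g r)"
proof -
  note ae = indicator_Ici_Ioi_AE[of s g]
  show "(\<integral>r. indicator {s..} r * g r \<partial>lborel) = (\<integral>r. indicator {s<..} r * g r \<partial>lborel)"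
    by (rule integral_cong_AE[OF _ _ ae]) auto
  show "integrable lborel (\<lambda>r. indicator {s..} r * g r) \<longleftrightarrow> integrable lborel (\<lambda>r. indicator {s<..} r * g r)"
    by (rule integrable_cong_AE[OF _ _ ae]) auto
qed

lemma integrable_indicator_Ioc_const: "integrable lborel (\<lambda>s::real. indicator {u<..v} s * (c::real))"
proof -
  have "integrable lborel (indicator {u<..v} :: real \<Rightarrow> real)"
    by (subst integrable_indicator_iff) (cases "u \<le> v", auto)
  then show ?thesis by (intro integrable_mult_left)
qed

lemma
  fixes c s :: real assumes c: "c > 0"
  shows integrable_exp_neg_Ioi: "integrable lborel (\<lambda>t. indicator {s<..} t * exp (- c * t))"
    and integral_exp_neg_Ioi: "(\<integral>t. indicator {s<..} t * exp (- c * t) \<partial>lborel) = exp (- c * s) / c"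
proof -
  have h: "((\<lambda>t. exp (- c * t)) has_integral (exp (- c * s) / c)) {s..}"
    using has_integral_exp_minus_to_infinity[OF c] .
  have "(\<lambda>t. exp (- c * t)) absolutely_integrable_on {s..}"
    by (rule nonnegative_absolutely_integrable_1) (use h in \<open>auto simp: integrable_on_def\<close>)
  then have si: "set_integrable lborel {s..} (\<lambda>t. exp (- c * t))"
    unfolding set_integrable_def
    by (subst (asm) integrable_completion) (auto intro!: borel_measurable_continuous_on_indicator continuous_intros)
  then show "integrable lborel (\<lambda>t. indicator {s<..} t * exp (- c * t))"
    by (subst integrable_indicator_Ici_Ioi_iff[symmetric]) (auto simp: set_integrable_def)
  have "(\<integral>t. indicator {s..} t * exp (- c * t) \<partial>lborel) = exp (- c * s) / c"
    using set_borel_integral_eq_integral(2)[OF si] h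
    by (simp add: integral_unique set_lebesgue_integral_def)
  then show "(\<integral>t. indicator {s<..} t * exp (- c * t) \<partial>lborel) = exp (- c * s) / c"
    by (subst integral_indicator_Ici_Ioi[symmetric]) auto
qed

lemma
  fixes c t :: real assumes c: "c > 0" and t: "t \<ge> 0"
  shows integral_exp_Ioc: "(\<integral>s. indicator {0<..t} s * (c * exp (c * s)) \<partial>lborel) = exp (c * t) - 1"
proof -
  have h: "((\<lambda>s. c * exp (c * s)) has_integral (exp (c * t) - exp (c * 0))) {0..t}"
    using t by (intro fundamental_theorem_of_calculus)
         (auto intro!: derivative_eq_intros simp flip: has_real_derivative_iff_has_vector_derivative)
  have "(\<lambda>s. c * exp (c * s)) absolutely_integrable_on {0..t}"
    by (rule nonnegative_absolutely_integrable_1) (use h c in \<open>auto simp: integrable_on_def\<close>)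
  then have si: "set_integrable lborel {0..t} (\<lambda>s. c * exp (c * s))"
    unfolding set_integrable_def
    by (subst (asm) integrable_completion) (auto intro!: borel_measurable_continuous_on_indicator continuous_intros)
  have ae: "AE s in lborel. indicator {0..t} s * (c * exp (c * s)) = indicator {0<..t} s * (c * exp (c * s))"
    using AE_lborel_singleton[of 0] by eventually_elim (auto simp: indicator_def)
  have "(LINT s:{0..t}|lborel. c * exp (c * s)) = integral {0..t} (\<lambda>s. c * exp (c * s))"
    by (rule set_borel_integral_eq_integral(2)[OF si])
  also have "\<dots> = exp (c * t) - 1"
    using integral_unique[OF h] by simp
  finally have "(\<integral>s. indicator {0..t} s * (c * exp (c * s)) \<partial>lborel) = exp (c * t) - 1"
    by (simp only: set_lebesgue_integral_def real_scaleR_def)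
  then show ?thesis
    by (subst integral_cong_AE[OF _ _ ae, symmetric]) auto
qed

lemma integral_Iic_exp_Ioc:
  fixes c t :: real assumes c: "c > 0" and t: "t \<ge> 0"
  shows "(\<integral>s. indicator {..r} s * (indicator {0<..t} s * (c * exp (c * s))) \<partial>lborel)
       = indicator {0<..} r * (exp (c * min t r) - 1)"
proof (cases "r > 0")
  case True
  have "(\<lambda>s. indicator {..r} s * (indicator {0<..t} s * (c * exp (c * s))))
      = (\<lambda>s. indicator {0<..min t r} s * (c * exp (c * s)))"
    by (auto simp: fun_eq_iff indicator_def)
  then show ?thesis
    using integral_exp_Ioc[OF c, of "min t r"] True t by simp
next
  case False
  then have "(\<lambda>s. indicator {..r} s * (indicator {0<..t} s * (c * exp (c * s)))) = (\<lambda>s. 0)"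
    by (auto simp: fun_eq_iff indicator_def)
  then show ?thesis
    using False by simp
qed

lemma measurable_indicator_Ici_pair[measurable]:
  "(\<lambda>p::real \<times> real. indicator {fst p..} (snd p) :: real) \<in> borel_measurable (lborel \<Otimes>\<^sub>M lborel)"
proof -
  have "(\<lambda>p::real \<times> real. indicator {fst p..} (snd p) :: real) = (\<lambda>p. if fst p \<le> snd p then 1 else 0)"
    by (auto simp: indicator_def)
  also have "\<dots> \<in> borel_measurable (lborel \<Otimes>\<^sub>M lborel)" by measurable
  finally show ?thesis .
qed

lemma measurable_indicator_Ioi_pair[measurable]:
  "(\<lambda>p::real \<times> real. indicator {fst p<..} (snd p) :: real) \<in> borel_measurable (lborel \<Otimes>\<^sub>M lborel)"
proof -
  have "(\<lambda>p::real \<times> real. indicator {fst p<..} (snd p) :: real) = (\<lambda>p. if fst p < snd p then 1 else 0)"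
    by (auto simp: indicator_def)
  also have "\<dots> \<in> borel_measurable (lborel \<Otimes>\<^sub>M lborel)" by measurable
  finally show ?thesis .
qed

lemma lborel_integral_triangle_swap:
  fixes a b :: "real \<Rightarrow> real"
  assumes [measurable]: "a \<in> borel_measurable borel" "b \<in> borel_measurable borel"
    and b_int: "\<And>s. a s \<noteq> 0 \<Longrightarrow> integrable lborel (\<lambda>r. indicator {s..} r * b r)"
    and ab_int: "integrable lborel (\<lambda>s. \<bar>a s\<bar> * (\<integral>r. indicator {s..} r * \<bar>b r\<bar> \<partial>lborel))"
  shows "(\<integral>s. a s * (\<integral>r. indicator {s..} r * b r \<partial>lborel) \<partial>lborel)
       = (\<integral>r. b r * (\<integral>s. indicator {..r} s * a s \<partial>lborel) \<partial>lborel)"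
proof -
  define F where "F s r = a s * (indicator {s..} r * b r)" for s r :: real
  have "integrable (lborel \<Otimes>\<^sub>M lborel) (case_prod F)"
  proof (rule lborel_pair.Fubini_integrable)
    show "case_prod F \<in> borel_measurable (lborel \<Otimes>\<^sub>M lborel)"
      unfolding F_def by measurable
    have "(\<integral>r. norm (F s r) \<partial>lborel) = \<bar>a s\<bar> * (\<integral>r. indicator {s..} r * \<bar>b r\<bar> \<partial>lborel)" for s
      by (simp add: F_def abs_mult)
    then show "integrable lborel (\<lambda>s. \<integral>r. norm (case_prod F (s, r)) \<partial>lborel)"
      using ab_int by simp
    show "AE s in lborel. integrable lborel (\<lambda>r. case_prod F (s, r))"
      using b_int by (auto simp: F_def)
  qed
  then have "(\<integral>r. (\<integral>s. F s r \<partial>lborel) \<partial>lborel) = (\<integral>s. (\<integral>r. F s r \<partial>lborel) \<partial>lborel)"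
    by (rule lborel_pair.Fubini_integral)
  moreover have "(\<integral>s. F s r \<partial>lborel) = b r * (\<integral>s. indicator {..r} s * a s \<partial>lborel)" for r
  proof -
    have "(\<lambda>s. F s r) = (\<lambda>s. b r * (indicator {..r} s * a s))"
      by (auto simp: F_def indicator_def)
    then show ?thesis by simp
  qed
  moreover have "(\<integral>r. F s r \<partial>lborel) = a s * (\<integral>r. indicator {s..} r * b r \<partial>lborel)" for s
    by (simp add: F_def)
  ultimately show ?thesis
    by simp
qed

section \<open>Laplace tails of exponentially bounded functions\<close>

definition laplace_tail :: "(real \<Rightarrow> real) \<Rightarrow> real \<Rightarrow> real \<Rightarrow> real" where
  "laplace_tail \<phi> l s = (\<integral>r. indicator {s<..} r * (exp (- l * r) * \<phi> r) \<partial>lborel)"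

locale exp_bounded =
  fixes \<phi> :: "real \<Rightarrow> real" and C a l :: real
  assumes measurable_phi[measurable]: "\<phi> \<in> borel_measurable borel"
    and abs_phi_le: "\<And>s. s > 0 \<Longrightarrow> \<bar>\<phi> s\<bar> \<le> C * exp (a * s)"
    and rate_nonneg: "0 \<le> a" and rate_less: "a < l"
begin

abbreviation J where "J \<equiv> laplace_tail \<phi> l"

lemma l_pos: "l > 0"
  using rate_nonneg rate_less by simp

lemma C_nonneg: "C \<ge> 0"
proof -
  have "0 \<le> \<bar>\<phi> 1\<bar>" by simp
  also have "\<dots> \<le> C * exp (a * 1)" by (rule abs_phi_le) simp
  finally show ?thesis by (simp add: zero_le_mult_iff)
qed

lemma abs_exp_phi_le: "r > 0 \<Longrightarrow> \<bar>exp (- l * r) * \<phi> r\<bar> \<le> C * exp (- (l - a) * r)"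
proof -
  assume r: "r > 0"
  have "\<bar>exp (- l * r) * \<phi> r\<bar> \<le> exp (- l * r) * (C * exp (a * r))"
    using abs_phi_le[OF r] by (simp add: abs_mult)
  also have "\<dots> = C * exp (- (l - a) * r)"
    by (simp add: algebra_simps flip: exp_add)
  finally show ?thesis .
qed

lemma integrable_tail:
  assumes s: "s \<ge> 0"
  shows "integrable lborel (\<lambda>r. indicator {s<..} r * (exp (- l * r) * \<phi> r))"
proof (rule Bochner_Integration.integrable_bound)
  show "integrable lborel (\<lambda>r. C * (indicator {s<..} r * exp (- (l - a) * r)))"
    using integrable_exp_neg_Ioi[of "l - a" s] rate_less by auto
  show "AE r in lborel. norm (indicator {s<..} r * (exp (- l * r) * \<phi> r))
      \<le> norm (C * (indicator {s<..} r * exp (- (l - a) * r)))"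
    using abs_exp_phi_le s C_nonneg by (auto simp: indicator_def abs_mult)
qed auto

lemma integral_abs_tail_le:
  assumes s: "s \<ge> 0"
  shows "(\<integral>r. indicator {s<..} r * \<bar>exp (- l * r) * \<phi> r\<bar> \<partial>lborel) \<le> C / (l - a)"
proof -
  have "(\<integral>r. indicator {s<..} r * \<bar>exp (- l * r) * \<phi> r\<bar> \<partial>lborel)
      \<le> (\<integral>r. C * (indicator {0<..} r * exp (- (l - a) * r)) \<partial>lborel)"
  proof (rule integral_mono)
    show "integrable lborel (\<lambda>r. indicator {s<..} r * \<bar>exp (- l * r) * \<phi> r\<bar>)"
      using integrable_abs[OF integrable_tail[OF s]] by (simp add: abs_mult)
    show "integrable lborel (\<lambda>r. C * (indicator {0<..} r * exp (- (l - a) * r)))"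
      using integrable_exp_neg_Ioi[of "l - a" 0] rate_less by auto
    show "indicator {s<..} r * \<bar>exp (- l * r) * \<phi> r\<bar> \<le> C * (indicator {0<..} r * exp (- (l - a) * r))" for r
      using abs_exp_phi_le[of r] s C_nonneg by (auto simp: indicator_def)
  qed
  also have "\<dots> = C / (l - a)"
    using integral_exp_neg_Ioi[of "l - a" 0] rate_less by simp
  finally show ?thesis .
qed

lemma abs_laplace_tail_le:
  assumes s: "s \<ge> 0"
  shows "\<bar>J s\<bar> \<le> C / (l - a)"
proof -
  have "\<bar>J s\<bar> \<le> (\<integral>r. indicator {s<..} r * \<bar>exp (- l * r) * \<phi> r\<bar> \<partial>lborel)"
    unfolding laplace_tail_def
    using Bochner_Integration.integral_norm_bound_integral[of lborel
        "\<lambda>r. indicator {s<..} r * (exp (- l * r) * \<phi> r)" "\<lambda>r. indicator {s<..} r * \<bar>exp (- l * r) * \<phi> r\<bar>"]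
      integrable_tail[OF s] integrable_abs[OF integrable_tail[OF s]]
    by (simp add: abs_mult)
  also have "\<dots> \<le> C / (l - a)"
    by (rule integral_abs_tail_le[OF s])
  finally show ?thesis .
qed

lemma measurable_laplace_tail[measurable]: "J \<in> borel_measurable borel"
proof -
  have "J \<in> borel_measurable lborel"
    unfolding laplace_tail_def by measurable
  then show ?thesis by simp
qed

lemma integrable_Ioc_phi: "integrable lborel (\<lambda>r. indicator {0<..t} r * \<phi> r)"
proof (rule Bochner_Integration.integrable_bound)
  show "integrable lborel (\<lambda>r. indicator {0<..t} r * (C * exp (a * t)))"
    by (rule integrable_indicator_Ioc_const)
  have "\<bar>\<phi> r\<bar> \<le> C * exp (a * t)" if r: "r \<in> {0<..t}" for r
  proof (rule order_trans[OF abs_phi_le])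
    have "a * r \<le> a * t"
      using r rate_nonneg by (intro mult_left_mono) auto
    then show "C * exp (a * r) \<le> C * exp (a * t)"
      using C_nonneg by (intro mult_left_mono) auto
  qed (use r in auto)
  then show "AE r in lborel. norm (indicator {0<..t} r * \<phi> r) \<le> norm (indicator {0<..t} r * (C * exp (a * t)))"
    using C_nonneg by (auto simp: indicator_def)
qed auto

lemma laplace_primitive:
  "l * (\<integral>t. indicator {0<..} t * (exp (- l * t) * (\<integral>s. indicator {0<..t} s * \<phi> s \<partial>lborel)) \<partial>lborel)
    = J 0"
proof -
  define b where "b t = l * exp (- l * t)" for t
  have tail_b: "(\<integral>t. indicator {s..} t * b t \<partial>lborel) = exp (- l * s)"
    and integrable_b: "integrable lborel (\<lambda>t. indicator {s..} t * b t)" for s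
    using integral_exp_neg_Ioi[OF l_pos, of s] integrable_exp_neg_Ioi[OF l_pos, of s] l_pos
    by (simp_all add: b_def integral_indicator_Ici_Ioi integrable_indicator_Ici_Ioi_iff mult.left_commute)
  have primitive: "(\<integral>s. indicator {..t} s * (indicator {0<..} s * \<phi> s) \<partial>lborel)
      = indicator {0<..} t * (\<integral>s. indicator {0<..t} s * \<phi> s \<partial>lborel)" for t
  proof -
    have "(\<lambda>s. indicator {..t} s * (indicator {0<..} s * \<phi> s)) = (\<lambda>s. indicator {0<..t} s * \<phi> s)"
      by (auto simp: fun_eq_iff indicator_def)
    moreover have "t \<le> 0 \<Longrightarrow> (\<lambda>s. indicator {0<..t} s * \<phi> s) = (\<lambda>s. 0)"
      by (auto simp: fun_eq_iff indicator_def)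
    ultimately show ?thesis
      by (cases "t > 0") auto
  qed
  have "(\<integral>s. (indicator {0<..} s * \<phi> s) * (\<integral>t. indicator {s..} t * b t \<partial>lborel) \<partial>lborel)
      = (\<integral>t. b t * (\<integral>s. indicator {..t} s * (indicator {0<..} s * \<phi> s) \<partial>lborel) \<partial>lborel)"
  proof (rule lborel_integral_triangle_swap)
    have "(\<lambda>s. \<bar>indicator {0<..} s * \<phi> s\<bar> * (\<integral>t. indicator {s..} t * \<bar>b t\<bar> \<partial>lborel))
        = (\<lambda>s. \<bar>indicator {0<..} s * (exp (- l * s) * \<phi> s)\<bar>)"
      using tail_b l_pos by (simp add: b_def abs_mult mult_ac)
    then show "integrable lborel (\<lambda>s. \<bar>indicator {0<..} s * \<phi> s\<bar> * (\<integral>t. indicator {s..} t * \<bar>b t\<bar> \<partial>lborel))"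
      using integrable_abs[OF integrable_tail[of 0]] by simp
  qed (use integrable_b in \<open>auto simp: b_def\<close>)
  then show ?thesis
    unfolding tail_b primitive laplace_tail_def
    by (simp add: b_def mult_ac)
qed

lemma integrable_exp_times_abs_tail:
  "integrable lborel
     (\<lambda>s. \<bar>indicator {0<..t} s * (l * exp (l * s))\<bar> * (\<integral>r. indicator {s..} r * \<bar>exp (- l * r) * \<phi> r\<bar> \<partial>lborel))"
proof (rule Bochner_Integration.integrable_bound)
  show "integrable lborel (\<lambda>s. indicator {0<..t} s * (l * exp (l * t) * (C / (l - a))))"
    by (rule integrable_indicator_Ioc_const)
  have "l * exp (l * s) * (\<integral>r. indicator {s..} r * \<bar>exp (- l * r) * \<phi> r\<bar> \<partial>lborel) \<le> l * exp (l * t) * (C / (l - a))"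
    if s: "s \<in> {0<..t}" for s
  proof (rule mult_mono)
    have "(\<integral>r. indicator {s..} r * \<bar>exp (- l * r) * \<phi> r\<bar> \<partial>lborel)
        = (\<integral>r. indicator {s<..} r * \<bar>exp (- l * r) * \<phi> r\<bar> \<partial>lborel)"
      by (rule integral_indicator_Ici_Ioi) simp
    then show "(\<integral>r. indicator {s..} r * \<bar>exp (- l * r) * \<phi> r\<bar> \<partial>lborel) \<le> C / (l - a)"
      using integral_abs_tail_le[of s] s by simp
  qed (use s l_pos in \<open>auto intro: integral_nonneg_AE\<close>)
  then show "AE s in lborel.
      norm (\<bar>indicator {0<..t} s * (l * exp (l * s))\<bar> * (\<integral>r. indicator {s..} r * \<bar>exp (- l * r) * \<phi> r\<bar> \<partial>lborel))
        \<le> norm (indicator {0<..t} s * (l * exp (l * t) * (C / (l - a))))"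
    using l_pos C_nonneg rate_less by (intro AE_I2) (auto simp: indicator_def integral_nonneg_AE)
qed measurable

lemma integral_exp_laplace_tail:
  assumes t: "t \<ge> 0"
  shows "(\<integral>s. indicator {0<..t} s * (l * exp (l * s)) * J s \<partial>lborel)
       = (\<integral>r. indicator {0<..t} r * \<phi> r \<partial>lborel) + exp (l * t) * J t - J 0"
proof -
  define w where "w s = indicator {0<..t} s * (l * exp (l * s))" for s
  define b where "b r = exp (- l * r) * \<phi> r" for r
  have w_meas: "w \<in> borel_measurable borel" and b_meas: "b \<in> borel_measurable borel"
    unfolding w_def[abs_def] b_def[abs_def] by simp_all
  have b_int: "integrable lborel (\<lambda>r. indicator {s..} r * b r)" if "w s \<noteq> 0" for s
  proof -
    have "s > 0"
      using that by (auto simp: w_def indicator_def)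
    then show ?thesis
      unfolding b_def using integrable_tail[of s] by (subst integrable_indicator_Ici_Ioi_iff) auto
  qed
  have J_Ici: "(\<integral>r. indicator {s..} r * b r \<partial>lborel) = J s" for s
    unfolding b_def laplace_tail_def by (rule integral_indicator_Ici_Ioi) simp
  have split: "b r * (indicator {0<..} r * (exp (l * min t r) - 1))
      = indicator {0<..t} r * \<phi> r + exp (l * t) * (indicator {t<..} r * b r) - indicator {0<..} r * b r" for r
  proof -
    have "exp (- l * r) * exp (l * r) = 1"
      by (simp flip: exp_add)
    then show ?thesis
      using t by (cases "r > 0"; cases "r \<le> t") (auto simp: b_def indicator_def min_def algebra_simps)
  qed
  have ab_int: "integrable lborel (\<lambda>s. \<bar>w s\<bar> * (\<integral>r. indicator {s..} r * \<bar>b r\<bar> \<partial>lborel))"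
    using integrable_exp_times_abs_tail[of t] unfolding w_def b_def .
  have exp_Ioc: "(\<integral>s. indicator {..r} s * w s \<partial>lborel) = indicator {0<..} r * (exp (l * min t r) - 1)" for r
    unfolding w_def by (rule integral_Iic_exp_Ioc[OF l_pos t])
  have "(\<integral>s. w s * J s \<partial>lborel) = (\<integral>r. b r * (indicator {0<..} r * (exp (l * min t r) - 1)) \<partial>lborel)"
    using lborel_integral_triangle_swap[OF w_meas b_meas b_int ab_int]
    unfolding J_Ici exp_Ioc by simp
  also have "\<dots> = (\<integral>r. indicator {0<..t} r * \<phi> r \<partial>lborel) + exp (l * t) * J t - J 0"
    unfolding split laplace_tail_def
    using integrable_Ioc_phi[of t] integrable_tail[of t] integrable_tail[of 0] t by (simp add: b_def)
  finally show ?thesis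
    by (simp add: w_def)
qed

text \<open>The integrated form of (exp (l s) J s)' = l exp (l s) J s - \<phi> s, which cannot be obtained by
  differentiation since \<phi> is merely measurable.\<close>

lemma laplace_tail_exp_diff:
  assumes t: "t \<ge> 0"
  shows "exp (l * t) * J t - J 0 = (\<integral>s. indicator {0<..t} s * (l * exp (l * s) * J s - \<phi> s) \<partial>lborel)"
proof -
  have "integrable lborel (\<lambda>s. indicator {0<..t} s * (l * exp (l * s)) * J s)"
  proof (rule Bochner_Integration.integrable_bound)
    show "integrable lborel (\<lambda>s. indicator {0<..t} s * (l * exp (l * t) * (C / (l - a))))"
      by (rule integrable_indicator_Ioc_const)
    have "l * exp (l * s) * \<bar>J s\<bar> \<le> l * exp (l * t) * (C / (l - a))" if "s \<in> {0<..t}" for s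
      using that l_pos abs_laplace_tail_le[of s] by (intro mult_mono) auto
    then show "AE s in lborel. norm (indicator {0<..t} s * (l * exp (l * s)) * J s)
        \<le> norm (indicator {0<..t} s * (l * exp (l * t) * (C / (l - a))))"
      using l_pos C_nonneg rate_less by (intro AE_I2) (auto simp: indicator_def abs_mult)
  qed simp
  then have "(\<integral>s. indicator {0<..t} s * (l * exp (l * s) * J s - \<phi> s) \<partial>lborel)
      = (\<integral>s. indicator {0<..t} s * (l * exp (l * s)) * J s \<partial>lborel) - (\<integral>s. indicator {0<..t} s * \<phi> s \<partial>lborel)"
    using integrable_Ioc_phi by (simp add: algebra_simps)
  then show ?thesis
    using integral_exp_laplace_tail[OF t] by simp
qed

lemma laplace_tail_shift:
  "(\<integral>r. indicator {0<..} r * (exp (- l * r) * \<phi> (s + r)) \<partial>lborel) = exp (l * s) * J s"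
proof -
  have "J s = (\<integral>r. indicator {s<..} (s + 1 * r) * (exp (- l * (s + 1 * r)) * \<phi> (s + 1 * r)) \<partial>lborel)"
    unfolding laplace_tail_def
    using lborel_integral_real_affine[of 1 "\<lambda>r. indicator {s<..} r * (exp (- l * r) * \<phi> r)" s] by simp
  also have "\<dots> = (\<integral>r. exp (- l * s) * (indicator {0<..} r * (exp (- l * r) * \<phi> (s + r))) \<partial>lborel)"
    by (intro Bochner_Integration.integral_cong refl) (auto simp: indicator_def algebra_simps simp flip: exp_add)
  also have "\<dots> = exp (- l * s) * (\<integral>r. indicator {0<..} r * (exp (- l * r) * \<phi> (s + r)) \<partial>lborel)"
    by simp
  finally show ?thesis
    by (simp add: exp_minus field_simps)
qed

end

section \<open>Bounded Borel functions and kernel operators\<close>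

lemma BbI: "f \<in> borel_measurable borel \<Longrightarrow> (\<And>x. \<bar>f x\<bar> \<le> C) \<Longrightarrow> f \<in> Bb"
  unfolding Bb_def bounded_real by auto

lemma Bb_measurable[measurable_dest]: "f \<in> Bb \<Longrightarrow> f \<in> borel_measurable borel"
  unfolding Bb_def by auto

lemma Bb_bounded: "f \<in> Bb \<Longrightarrow> \<exists>C. \<forall>x. \<bar>f x\<bar> \<le> C"
  unfolding Bb_def bounded_real by auto

lemma abs_le_supn: "f \<in> Bb \<Longrightarrow> \<bar>f x\<bar> \<le> supn f"
proof -
  assume "f \<in> Bb"
  then obtain C where "\<forall>x. \<bar>f x\<bar> \<le> C"
    using Bb_bounded by blast
  then have "bdd_above (range (\<lambda>x. \<bar>f x\<bar>))"
    by (auto intro: bdd_aboveI2)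
  then show ?thesis
    unfolding supn_def by (rule cSUP_upper[rotated]) simp
qed

lemma supn_nonneg: "f \<in> Bb \<Longrightarrow> 0 \<le> supn f"
  using abs_le_supn[of f undefined] by linarith

lemma supn_le: "(\<And>x. \<bar>f x\<bar> \<le> c) \<Longrightarrow> supn f \<le> c"
  unfolding supn_def by (rule cSUP_least) auto

lemma Bb_const: "(\<lambda>x. c) \<in> Bb"
  by (rule BbI[where C="\<bar>c\<bar>"]) auto

lemma supn_const: "supn (\<lambda>x. c) = \<bar>c\<bar>"
  unfolding supn_def by simp

lemma Bb_add: "f \<in> Bb \<Longrightarrow> g \<in> Bb \<Longrightarrow> (\<lambda>x. f x + g x) \<in> Bb"
  by (rule BbI[where C="supn f + supn g"])
     (auto intro!: abs_triangle_ineq[THEN order_trans] add_mono abs_le_supn)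

lemma Bb_cmult: "f \<in> Bb \<Longrightarrow> (\<lambda>x. c * f x) \<in> Bb"
  by (rule BbI[where C="\<bar>c\<bar> * supn f"]) (auto simp: abs_mult intro!: mult_left_mono abs_le_supn)

lemma Bb_diff: "f \<in> Bb \<Longrightarrow> g \<in> Bb \<Longrightarrow> (\<lambda>x. f x - g x) \<in> Bb"
  using Bb_add[of f "\<lambda>x. (-1) * g x"] Bb_cmult[of g "-1"] by simp

lemma integrable_Bb:
  assumes "finite_measure \<mu>" "sets \<mu> = sets borel" "f \<in> Bb"
  shows "integrable \<mu> f"
proof -
  interpret finite_measure \<mu> by fact
  obtain C where "\<forall>x. \<bar>f x\<bar> \<le> C"
    using Bb_bounded[OF assms(3)] by blast
  moreover have "measurable \<mu> (borel :: real measure) = measurable borel borel"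
    by (rule measurable_cong_sets[OF assms(2)]) simp
  then have "f \<in> borel_measurable \<mu>"
    using Bb_measurable[OF assms(3)] by simp
  ultimately show ?thesis
    by (intro integrable_const_bound[where B=C]) auto
qed

lemma kernel_opE:
  assumes "kernel_op K"
  obtains kp km :: "'a::topological_space \<Rightarrow> 'a measure"
  where "\<And>x. finite_measure (kp x)" "\<And>x. sets (kp x) = sets borel"
    and "\<And>x. finite_measure (km x)" "\<And>x. sets (km x) = sets borel"
    and "\<And>f x. f \<in> Bb \<Longrightarrow> K f x = integral\<^sup>L (kp x) f - integral\<^sup>L (km x) f"
proof -
  obtain kp km :: "'a \<Rightarrow> 'a measure"
    where "\<forall>x. sets (kp x) = sets borel \<and> sets (km x) = sets borel \<and> finite_measure (kp x) \<and> finite_measure (km x)"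
      and "\<forall>f\<in>Bb. \<forall>x. K f x = integral\<^sup>L (kp x) f - integral\<^sup>L (km x) f"
    using assms unfolding kernel_op_def by blast
  then show thesis
    by (intro that[of kp km]) auto
qed

lemma kernel_op_add:
  assumes "kernel_op K" "f \<in> Bb" "g \<in> Bb"
  shows "K (\<lambda>x. f x + g x) x = K f x + K g x"
proof -
  obtain kp km where "\<And>x. finite_measure (kp x)" "\<And>x. sets (kp x) = sets borel"
    "\<And>x. finite_measure (km x)" "\<And>x. sets (km x) = sets borel"
    and K: "\<And>f x. f \<in> Bb \<Longrightarrow> K f x = integral\<^sup>L (kp x) f - integral\<^sup>L (km x) f"
    using kernel_opE[OF assms(1)] by blast
  then show ?thesis
    using assms(2,3) Bb_add[OF assms(2,3)] by (simp add: integrable_Bb)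
qed

lemma kernel_op_cmult:
  assumes "kernel_op K" "f \<in> Bb"
  shows "K (\<lambda>x. c * f x) x = c * K f x"
proof -
  obtain kp km where "\<And>x. finite_measure (kp x)" "\<And>x. sets (kp x) = sets borel"
    "\<And>x. finite_measure (km x)" "\<And>x. sets (km x) = sets borel"
    and K: "\<And>f x. f \<in> Bb \<Longrightarrow> K f x = integral\<^sup>L (kp x) f - integral\<^sup>L (km x) f"
    using kernel_opE[OF assms(1)] by blast
  have "K (\<lambda>y. c * f y) x = integral\<^sup>L (kp x) (\<lambda>y. c * f y) - integral\<^sup>L (km x) (\<lambda>y. c * f y)"
    by (rule K[OF Bb_cmult[OF assms(2)]])
  also have "\<dots> = c * K f x"
    using K[OF assms(2)] by (simp add: right_diff_distrib)
  finally show ?thesis .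
qed

lemma kernel_op_diff:
  assumes "kernel_op K" "f \<in> Bb" "g \<in> Bb"
  shows "K (\<lambda>x. f x - g x) x = K f x - K g x"
proof -
  have "K (\<lambda>x. f x + (-1) * g x) x = K f x + K (\<lambda>x. (-1) * g x) x"
    using assms by (intro kernel_op_add Bb_cmult)
  then show ?thesis
    using kernel_op_cmult[OF assms(1,3), of "-1" x] by simp
qed

lemma kernel_op_zero:
  assumes "kernel_op K"
  shows "K (\<lambda>x. 0) x = 0"
  using kernel_op_cmult[OF assms Bb_const[of 0], where c=0 and x=x] by simp

lemma kernel_op_dominated_convergence:
  assumes K: "kernel_op K" and fs: "\<And>n. fs n \<in> Bb" and f: "f \<in> Bb"
    and bound: "\<And>n y. \<bar>fs n y\<bar> \<le> D" and lim: "\<And>y. (\<lambda>n. fs n y) \<longlonglongrightarrow> f y"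
  shows "(\<lambda>n. K (fs n) x) \<longlonglongrightarrow> K f x"
proof -
  have conv: "(\<lambda>n. integral\<^sup>L \<mu> (fs n)) \<longlonglongrightarrow> integral\<^sup>L \<mu> f"
    if "finite_measure \<mu>" "sets \<mu> = sets borel" for \<mu>
  proof -
    interpret finite_measure \<mu> by fact
    have "measurable \<mu> (borel :: real measure) = measurable borel borel"
      by (rule measurable_cong_sets[OF that(2)]) simp
    then show ?thesis
      using fs f bound lim
      by (intro integral_dominated_convergence[where w="\<lambda>_. D"]) auto
  qed
  obtain kp km where "\<And>x. finite_measure (kp x)" "\<And>x. sets (kp x) = sets borel"
    "\<And>x. finite_measure (km x)" "\<And>x. sets (km x) = sets borel"
    and "\<And>f x. f \<in> Bb \<Longrightarrow> K f x = integral\<^sup>L (kp x) f - integral\<^sup>L (km x) f"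
    using kernel_opE[OF K] by blast
  then show ?thesis
    using fs f by (simp add: conv tendsto_diff)
qed

lemma finite_measure_lborel_Fubini:
  fixes F :: "real \<Rightarrow> 'a::topological_space \<Rightarrow> real"
  assumes "finite_measure \<mu>" and sets_\<mu>: "sets \<mu> = sets borel"
    and F_meas: "case_prod F \<in> borel_measurable (lborel \<Otimes>\<^sub>M borel)"
    and F_le: "\<And>s y. \<bar>F s y\<bar> \<le> w s" and w: "integrable lborel w"
  shows "integrable lborel (\<lambda>s. \<integral>y. F s y \<partial>\<mu>)"
    and "(\<integral>s. (\<integral>y. F s y \<partial>\<mu>) \<partial>lborel) = (\<integral>y. (\<integral>s. F s y \<partial>lborel) \<partial>\<mu>)"
proof -
  interpret finite_measure \<mu> by fact
  have "sigma_finite_measure \<mu>"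
    using assms(1) by (metis finite_measure_def)
  then interpret P: pair_sigma_finite lborel \<mu>
    by (intro pair_sigma_finite.intro lborel.sigma_finite_measure_axioms)
  have sets_eq: "measurable (lborel \<Otimes>\<^sub>M \<mu>) (borel :: real measure) = measurable (lborel \<Otimes>\<^sub>M borel) borel"
    by (rule measurable_cong_sets[OF sets_pair_measure_cong[OF refl sets_\<mu>] refl])
  have F_meas_\<mu>[measurable]: "case_prod F \<in> borel_measurable (lborel \<Otimes>\<^sub>M \<mu>)"
    unfolding sets_eq by (rule F_meas)
  have section_int: "integrable \<mu> (F s)" for s
  proof (rule integrable_const_bound[where B="w s"])
    show "F s \<in> borel_measurable \<mu>"
      using measurable_Pair2[OF F_meas_\<mu>, of s] by simp
  qed (use F_le in auto)
  have section_le: "norm (\<integral>y. norm (F s y) \<partial>\<mu>) \<le> norm (measure \<mu> (space \<mu>) * w s)" for s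
  proof -
    have "(\<integral>y. \<bar>F s y\<bar> \<partial>\<mu>) \<le> (\<integral>y. w s \<partial>\<mu>)"
      using section_int F_le by (intro integral_mono) auto
    moreover have "0 \<le> (\<integral>y. \<bar>F s y\<bar> \<partial>\<mu>)"
      by (rule integral_nonneg_AE) simp
    ultimately show ?thesis
      by simp
  qed
  have "integrable (lborel \<Otimes>\<^sub>M \<mu>) (case_prod F)"
  proof (rule P.Fubini_integrable)
    show "integrable lborel (\<lambda>s. \<integral>y. norm (case_prod F (s, y)) \<partial>\<mu>)"
      using w section_le by (intro Bochner_Integration.integrable_bound[OF integrable_mult_right[OF w]]) auto
  qed (use section_int in auto)
  then show "integrable lborel (\<lambda>s. \<integral>y. F s y \<partial>\<mu>)"
    and "(\<integral>s. (\<integral>y. F s y \<partial>\<mu>) \<partial>lborel) = (\<integral>y. (\<integral>s. F s y \<partial>lborel) \<partial>\<mu>)"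
    using P.integrable_fst'[of "case_prod F"] P.Fubini_integral[of F] by auto
qed

lemma kernel_op_integral_commute:
  fixes F :: "real \<Rightarrow> 'a::topological_space \<Rightarrow> real"
  assumes K: "kernel_op K"
    and F_meas: "case_prod F \<in> borel_measurable (lborel \<Otimes>\<^sub>M borel)"
    and F_le: "\<And>s y. \<bar>F s y\<bar> \<le> w s" and w: "integrable lborel w"
    and F_Bb: "\<And>s. F s \<in> Bb" and int_F_Bb: "(\<lambda>y. \<integral>s. F s y \<partial>lborel) \<in> Bb"
  shows "K (\<lambda>y. \<integral>s. F s y \<partial>lborel) x = (\<integral>s. K (F s) x \<partial>lborel)"
proof -
  obtain kp km where kp: "finite_measure (kp x)" "sets (kp x) = sets borel"
    and km: "finite_measure (km x)" "sets (km x) = sets borel"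
    and K_eq: "\<And>f. f \<in> Bb \<Longrightarrow> K f x = integral\<^sup>L (kp x) f - integral\<^sup>L (km x) f"
    using kernel_opE[OF K] by metis
  note Fubini_p = finite_measure_lborel_Fubini[OF kp F_meas F_le w]
  note Fubini_m = finite_measure_lborel_Fubini[OF km F_meas F_le w]
  have "K (\<lambda>y. \<integral>s. F s y \<partial>lborel) x
      = (\<integral>s. (\<integral>y. F s y \<partial>kp x) \<partial>lborel) - (\<integral>s. (\<integral>y. F s y \<partial>km x) \<partial>lborel)"
    using K_eq[OF int_F_Bb] Fubini_p(2) Fubini_m(2) by simp
  also have "\<dots> = (\<integral>s. (\<integral>y. F s y \<partial>kp x) - (\<integral>y. F s y \<partial>km x) \<partial>lborel)"
    using Fubini_p(1) Fubini_m(1) by simp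
  also have "\<dots> = (\<integral>s. K (F s) x \<partial>lborel)"
    using K_eq[OF F_Bb] by simp
  finally show ?thesis .
qed

section \<open>Fixed points of kernel contractions\<close>

lemma wconv_add: "wconv f F \<Longrightarrow> wconv g G \<Longrightarrow> wconv (\<lambda>n x. f n x + g n x) (\<lambda>x. F x + G x)"
  unfolding wconv_def
proof (elim conjE exE, intro conjI allI)
  fix C1 C2 assume "\<forall>n x. \<bar>f n x\<bar> \<le> C1" "\<forall>n x. \<bar>g n x\<bar> \<le> C2"
  then have "\<bar>f n x + g n x\<bar> \<le> C1 + C2" for n x
    by (intro abs_triangle_ineq[THEN order_trans] add_mono) auto
  then show "\<exists>C. \<forall>n x. \<bar>f n x + g n x\<bar> \<le> C"
    by blast
next
  fix x assume "\<forall>x. (\<lambda>n. f n x) \<longlonglongrightarrow> F x" "\<forall>x. (\<lambda>n. g n x) \<longlonglongrightarrow> G x"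
  then show "(\<lambda>n. f n x + g n x) \<longlonglongrightarrow> F x + G x"
    by (intro tendsto_add) auto
qed

lemma wconv_cmult: "wconv f F \<Longrightarrow> wconv (\<lambda>n x. c * f n x) (\<lambda>x. c * F x)"
  unfolding wconv_def
proof (elim conjE exE, intro conjI allI)
  fix C assume "\<forall>n x. \<bar>f n x\<bar> \<le> C"
  then show "\<exists>C. \<forall>n x. \<bar>c * f n x\<bar> \<le> C"
    by (intro exI[of _ "\<bar>c\<bar> * C"]) (auto simp: abs_mult intro: mult_left_mono)
next
  fix x assume "\<forall>x. (\<lambda>n. f n x) \<longlonglongrightarrow> F x"
  then show "(\<lambda>n. c * f n x) \<longlonglongrightarrow> c * F x"
    by (intro tendsto_mult tendsto_const) auto
qed

lemma wconv_diff: "wconv f F \<Longrightarrow> wconv g G \<Longrightarrow> wconv (\<lambda>n x. f n x - g n x) (\<lambda>x. F x - G x)"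
  using wconv_add[of f F "\<lambda>n x. (-1) * g n x" "\<lambda>x. (-1) * G x"] wconv_cmult[of g G "-1"] by simp

lemma wconv_const: "f \<in> Bb \<Longrightarrow> wconv (\<lambda>n. f) f"
  unfolding wconv_def using abs_le_supn by auto

lemma LIMSEQ_zero_uniform_approx:
  fixes w :: "nat \<Rightarrow> real"
  assumes approx: "\<And>K n. \<bar>w n - a K n\<bar> \<le> r K"
    and a: "\<And>K. a K \<longlonglongrightarrow> 0" and r: "r \<longlonglongrightarrow> 0"
  shows "w \<longlonglongrightarrow> 0"
proof (rule LIMSEQ_I)
  fix \<epsilon> :: real assume "\<epsilon> > 0"
  then have \<epsilon>2: "\<epsilon> / 2 > 0" by simp
  obtain K where K: "\<bar>r K\<bar> < \<epsilon> / 2"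
    using LIMSEQ_D[OF r \<epsilon>2] by auto
  obtain N where N: "\<And>n. n \<ge> N \<Longrightarrow> \<bar>a K n\<bar> < \<epsilon> / 2"
    using LIMSEQ_D[OF a \<epsilon>2] by auto
  have "\<bar>w n\<bar> < \<epsilon>" if "n \<ge> N" for n
    using approx[of n K] K N[OF that] by linarith
  then show "\<exists>N. \<forall>n\<ge>N. norm (w n - 0) < \<epsilon>"
    by auto
qed

lemma convergent_geometric_increments:
  fixes x :: "nat \<Rightarrow> real"
  assumes steps: "\<And>k. \<bar>x (Suc k) - x k\<bar> \<le> D * q ^ k" and "0 \<le> q" "q < 1"
  shows "convergent x"
proof -
  have "summable (\<lambda>k. x (Suc k) - x k)"
  proof (rule summable_comparison_test)
    show "\<exists>N. \<forall>k\<ge>N. norm (x (Suc k) - x k) \<le> D * q ^ k"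
      using steps by auto
    show "summable (\<lambda>k. D * q ^ k)"
      using assms(2,3) by (intro summable_mult summable_geometric) simp
  qed
  moreover have "(\<lambda>k. x 0 + (\<Sum>j<k. x (Suc j) - x j)) = x"
    using sum_lessThan_telescope[of x] by (simp add: fun_eq_iff)
  ultimately show ?thesis
    by (metis convergent_add_const_iff summable_iff_convergent)
qed

definition kernel_contraction :: "real \<Rightarrow> (('a::topological_space \<Rightarrow> real) \<Rightarrow> ('a \<Rightarrow> real)) \<Rightarrow> bool" where
  "kernel_contraction q P \<longleftrightarrow> q < 1 \<and> kernel_op P \<and> (\<forall>h\<in>Bb. P h \<in> Bb) \<and> op_bound P q"

definition contraction_fixpoint ::
  "(('a::topological_space \<Rightarrow> real) \<Rightarrow> ('a \<Rightarrow> real)) \<Rightarrow> ('a \<Rightarrow> real) \<Rightarrow> ('a \<Rightarrow> real)" where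
  "contraction_fixpoint P f = (THE v. v \<in> Bb \<and> v = (\<lambda>x. f x + P v x))"

primrec picard_iterate ::
  "(('a::topological_space \<Rightarrow> real) \<Rightarrow> ('a \<Rightarrow> real)) \<Rightarrow> ('a \<Rightarrow> real) \<Rightarrow> nat \<Rightarrow> ('a \<Rightarrow> real)" where
  "picard_iterate P f 0 = f"
| "picard_iterate P f (Suc k) = (\<lambda>x. f x + P (picard_iterate P f k) x)"

context
  fixes q :: real and P :: "('a::topological_space \<Rightarrow> real) \<Rightarrow> ('a \<Rightarrow> real)"
  assumes P: "kernel_contraction q P"
begin

lemma contraction_less_1: "q < 1"
  and kernel_op_contraction: "kernel_op P"
  and contraction_Bb: "h \<in> Bb \<Longrightarrow> P h \<in> Bb"
  and abs_contraction_le: "h \<in> Bb \<Longrightarrow> \<bar>P h x\<bar> \<le> q * supn h"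
  using P unfolding kernel_contraction_def op_bound_def by auto

lemma contraction_nonneg: "0 \<le> q"
  using abs_contraction_le[OF Bb_const, of 1 undefined] by (simp add: supn_const)

lemma contraction_diff: "h \<in> Bb \<Longrightarrow> g \<in> Bb \<Longrightarrow> P (\<lambda>x. h x - g x) = (\<lambda>x. P h x - P g x)"
  using kernel_op_diff[OF kernel_op_contraction] by blast

lemma supn_le_contraction:
  assumes "h \<in> Bb" "\<And>x. \<bar>h x\<bar> \<le> c + q * supn h"
  shows "supn h \<le> c / (1 - q)"
  using supn_le[of h "c + q * supn h", OF assms(2)] contraction_less_1
  by (simp add: field_simps)

lemma contraction_fixpoint_unique:
  assumes v: "v \<in> Bb" "v = (\<lambda>x. f x + P v x)" and w: "w \<in> Bb" "w = (\<lambda>x. f x + P w x)"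
  shows "v = w"
proof -
  define d where "d x = v x - w x" for x
  have d: "d \<in> Bb"
    unfolding d_def by (rule Bb_diff[OF v(1) w(1)])
  have "d x = P d x" for x
  proof -
    have "d x = P v x - P w x"
      unfolding d_def by (subst v(2), subst w(2)) simp
    also have "\<dots> = P d x"
      unfolding d_def contraction_diff[OF v(1) w(1)] ..
    finally show ?thesis .
  qed
  then have "supn d \<le> 0 / (1 - q)"
    using abs_contraction_le[OF d] by (intro supn_le_contraction[OF d]) simp
  then have "\<bar>d x\<bar> \<le> 0" for x
    using abs_le_supn[OF d, of x] by simp
  then show ?thesis
    unfolding d_def by (auto simp: fun_eq_iff)
qed

lemma abs_contraction_fixpoint_le:
  assumes f: "f \<in> Bb" and v: "v \<in> Bb" "v = (\<lambda>x. f x + P v x)"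
  shows "\<bar>v x\<bar> \<le> supn f / (1 - q)"
proof -
  have "\<bar>v x\<bar> \<le> supn f + q * supn v" for x
    by (subst v(2), rule abs_triangle_ineq[THEN order_trans])
       (intro add_mono abs_le_supn[OF f] abs_contraction_le[OF v(1)])
  then have "supn v \<le> supn f / (1 - q)"
    by (rule supn_le_contraction[OF v(1)])
  then show ?thesis
    using abs_le_supn[OF v(1), of x] by simp
qed

lemma picard_iterate_Bb: "f \<in> Bb \<Longrightarrow> picard_iterate P f k \<in> Bb"
  by (induction k) (auto intro!: Bb_add contraction_Bb)

lemma abs_picard_iterate_le:
  assumes f: "f \<in> Bb"
  shows "\<bar>picard_iterate P f k x\<bar> \<le> supn f / (1 - q)"
proof (induction k arbitrary: x)
  case 0
  have "supn f \<le> supn f / (1 - q)"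
    using supn_nonneg[OF f] contraction_less_1 contraction_nonneg by (simp add: le_divide_eq mult_left_le)
  then show ?case
    using abs_le_supn[OF f, of x] by simp
next
  case (Suc k)
  have "\<bar>picard_iterate P f (Suc k) x\<bar> \<le> supn f + q * supn (picard_iterate P f k)"
    by (simp, rule abs_triangle_ineq[THEN order_trans])
      (intro add_mono abs_le_supn[OF f] abs_contraction_le[OF picard_iterate_Bb[OF f]])
  also have "\<dots> \<le> supn f + q * (supn f / (1 - q))"
    using supn_le[OF Suc.IH] contraction_nonneg by (intro add_left_mono mult_left_mono)
  also have "\<dots> = supn f / (1 - q)"
    using contraction_less_1 by (simp add: field_simps)
  finally show ?case .
qed

lemma abs_picard_iterate_step_le:
  assumes f: "f \<in> Bb"
  shows "\<bar>picard_iterate P f (Suc k) x - picard_iterate P f k x\<bar> \<le> supn (P f) * q ^ k"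
proof (induction k arbitrary: x)
  case 0
  then show ?case
    using abs_le_supn[OF contraction_Bb[OF f]] by simp
next
  case (Suc k)
  let ?step = "\<lambda>x. picard_iterate P f (Suc k) x - picard_iterate P f k x"
  have "picard_iterate P f (Suc (Suc k)) x - picard_iterate P f (Suc k) x
      = P (picard_iterate P f (Suc k)) x - P (picard_iterate P f k) x"
    by simp
  also have "\<dots> = P ?step x"
    by (simp only: contraction_diff[OF picard_iterate_Bb[OF f] picard_iterate_Bb[OF f]])
  finally have "\<bar>picard_iterate P f (Suc (Suc k)) x - picard_iterate P f (Suc k) x\<bar> = \<bar>P ?step x\<bar>"
    by simp
  also have "\<dots> \<le> q * supn ?step"
    by (rule abs_contraction_le[OF Bb_diff[OF picard_iterate_Bb[OF f] picard_iterate_Bb[OF f]]])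
  also have "\<dots> \<le> q * (supn (P f) * q ^ k)"
    using contraction_nonneg by (intro mult_left_mono supn_le Suc.IH)
  finally show ?case
    by (simp add: mult_ac)
qed

lemma contraction_fixpoint_exists:
  assumes f: "f \<in> Bb"
  shows "\<exists>v\<in>Bb. v = (\<lambda>x. f x + P v x)"
proof -
  define v where "v x = lim (\<lambda>k. picard_iterate P f k x)" for x
  have lim: "(\<lambda>k. picard_iterate P f k x) \<longlonglongrightarrow> v x" for x
    unfolding v_def convergent_LIMSEQ_iff[symmetric]
    using abs_picard_iterate_step_le[OF f] contraction_nonneg contraction_less_1
    by (rule convergent_geometric_increments)
  have v: "v \<in> Bb"
  proof (rule BbI)
    show "v \<in> borel_measurable borel"
      using picard_iterate_Bb[OF f] by (intro borel_measurable_LIMSEQ_real[OF lim]) auto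
    show "\<bar>v x\<bar> \<le> supn f / (1 - q)" for x
      using abs_picard_iterate_le[OF f] by (intro LIMSEQ_le_const2[OF tendsto_rabs[OF lim]]) auto
  qed
  have "(\<lambda>k. picard_iterate P f (Suc k) x) \<longlonglongrightarrow> f x + P v x" for x
    using lim abs_picard_iterate_le[OF f] picard_iterate_Bb[OF f] v
    by (simp only: picard_iterate.simps)
       (intro tendsto_add tendsto_const kernel_op_dominated_convergence[OF kernel_op_contraction])
  then have "v = (\<lambda>x. f x + P v x)"
    using LIMSEQ_unique[OF LIMSEQ_Suc[OF lim]] by blast
  with v show ?thesis by blast
qed

lemma contraction_fixpoint:
  assumes f: "f \<in> Bb"
  shows "contraction_fixpoint P f \<in> Bb"
    and "contraction_fixpoint P f = (\<lambda>x. f x + P (contraction_fixpoint P f) x)"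
proof -
  obtain v where v: "v \<in> Bb" "v = (\<lambda>x. f x + P v x)"
    using contraction_fixpoint_exists[OF f] by blast
  have "contraction_fixpoint P f = v"
    unfolding contraction_fixpoint_def
  proof (rule the_equality)
    show "v \<in> Bb \<and> v = (\<lambda>x. f x + P v x)"
      using v by (rule conjI)
    show "u = v" if "u \<in> Bb \<and> u = (\<lambda>x. f x + P u x)" for u
      using that contraction_fixpoint_unique[OF _ _ v] by blast
  qed
  then show "contraction_fixpoint P f \<in> Bb"
    and "contraction_fixpoint P f = (\<lambda>x. f x + P (contraction_fixpoint P f) x)"
    using v by (simp_all only:)
qed

lemma contraction_fixpoint_eqI:
  "v \<in> Bb \<Longrightarrow> v = (\<lambda>x. f x + P v x) \<Longrightarrow> f \<in> Bb \<Longrightarrow> contraction_fixpoint P f = v"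
  using contraction_fixpoint_unique[OF contraction_fixpoint[of f]] by blast

lemma contraction_power:
  assumes h: "h \<in> Bb"
  shows "(P ^^ k) h \<in> Bb" and "\<bar>(P ^^ k) h x\<bar> \<le> q ^ k * supn h"
proof -
  show Bb: "(P ^^ k) h \<in> Bb" for k
    by (induction k) (auto intro: contraction_Bb h)
  show "\<bar>(P ^^ k) h x\<bar> \<le> q ^ k * supn h"
  proof (induction k arbitrary: x)
    case 0
    then show ?case using abs_le_supn[OF h] by simp
  next
    case (Suc k)
    have "\<bar>(P ^^ Suc k) h x\<bar> \<le> q * supn ((P ^^ k) h)"
      using abs_contraction_le[OF Bb] by simp
    also have "\<dots> \<le> q * (q ^ k * supn h)"
      using contraction_nonneg by (intro mult_left_mono supn_le Suc.IH)
    finally show ?case by simp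
  qed
qed

lemma contraction_power_add:
  "h \<in> Bb \<Longrightarrow> g \<in> Bb \<Longrightarrow> (P ^^ k) (\<lambda>x. h x + g x) = (\<lambda>x. (P ^^ k) h x + (P ^^ k) g x)"
  by (induction k) (auto simp: kernel_op_add[OF kernel_op_contraction] contraction_power(1))


lemma contraction_unroll:
  assumes e: "e \<in> Bb" and w: "w \<in> Bb" "w = (\<lambda>x. e x + P w x)"
  shows "w x = (\<Sum>j<K. (P ^^ j) e x) + (P ^^ K) w x"
proof (induction K arbitrary: x)
  case (Suc K)
  have "(P ^^ K) w = (P ^^ K) (\<lambda>x. e x + P w x)"
    using w(2) by simp
  also have "\<dots> = (\<lambda>x. (P ^^ K) e x + (P ^^ Suc K) w x)"
    using contraction_power_add[OF e contraction_Bb[OF w(1)]]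
    by (simp add: funpow_Suc_right del: funpow.simps)
  finally show ?case
    using Suc.IH[of x] by (simp del: funpow.simps add: fun_eq_iff)
qed simp
end

lemma kernel_contraction_limit:
  assumes Pn: "\<And>n. kernel_contraction q (Pn n)" and P: "kernel_op P" "\<And>h. h \<in> Bb \<Longrightarrow> P h \<in> Bb"
    and lim: "\<And>h x. h \<in> Bb \<Longrightarrow> (\<lambda>n. Pn n h x) \<longlonglongrightarrow> P h x"
  shows "kernel_contraction q P"
proof -
  have "\<bar>P h x\<bar> \<le> q * supn h" if "h \<in> Bb" for h x
    using abs_contraction_le[OF Pn that]
    by (intro LIMSEQ_le_const2[OF tendsto_rabs[OF lim[OF that]]]) auto
  then show ?thesis
    using P contraction_less_1[OF Pn] unfolding kernel_contraction_def op_bound_def by blast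
qed

lemma wconv_null_contraction_solution:
  assumes Pn: "\<And>n. kernel_contraction q (Pn n)"
    and e: "\<And>n. e n \<in> Bb" "wconv e (\<lambda>x. 0)"
    and w: "\<And>n. w n \<in> Bb" "\<And>n x. \<bar>w n x\<bar> \<le> W" "\<And>n. w n = (\<lambda>x. e n x + Pn n (w n) x)"
    and conv_null: "\<And>hs. (\<forall>n. hs n \<in> Bb) \<Longrightarrow> wconv hs (\<lambda>x. 0) \<Longrightarrow> wconv (\<lambda>n. Pn n (hs n)) (\<lambda>x. 0)"
  shows "wconv w (\<lambda>x. 0)"
proof -
  have power_null: "wconv (\<lambda>n. (Pn n ^^ j) (e n)) (\<lambda>x. 0)" for j
  proof (induction j)
    case (Suc j)
    then show ?case
      using conv_null[of "\<lambda>n. (Pn n ^^ j) (e n)"] contraction_power(1)[OF Pn e(1)] by simp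
  qed (simp add: e(2))
  have "(\<lambda>n. w n x) \<longlonglongrightarrow> 0" for x
  proof (rule LIMSEQ_zero_uniform_approx)
    show "\<bar>w n x - (\<Sum>j<K. (Pn n ^^ j) (e n) x)\<bar> \<le> q ^ K * W" for K n
    proof -
      have "\<bar>(Pn n ^^ K) (w n) x\<bar> \<le> q ^ K * supn (w n)"
        by (rule contraction_power(2)[OF Pn w(1)])
      also have "\<dots> \<le> q ^ K * W"
        using supn_le[OF w(2)] contraction_nonneg[OF Pn] by (intro mult_left_mono) auto
      finally show ?thesis
        using contraction_unroll[OF Pn e(1) w(1) w(3), where x=x and K=K] by simp
    qed
    show "(\<lambda>n. \<Sum>j<K. (Pn n ^^ j) (e n) x) \<longlonglongrightarrow> 0" for K
      using power_null unfolding wconv_def by (intro tendsto_null_sum) auto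
    show "(\<lambda>K. q ^ K * W) \<longlonglongrightarrow> 0"
      using contraction_nonneg[OF Pn] contraction_less_1[OF Pn]
      by (intro tendsto_mult_left_zero LIMSEQ_power_zero) simp
  qed
  then show ?thesis
    unfolding wconv_def using w(2) by blast
qed

lemma wconv_contraction_fixpoint:
  assumes Pn: "\<And>n. kernel_contraction q (Pn n)" and P: "kernel_contraction q P" and f: "f \<in> Bb"
    and conv_fixpoint: "wconv (\<lambda>n. Pn n (contraction_fixpoint P f)) (P (contraction_fixpoint P f))"
    and conv_null: "\<And>hs. (\<forall>n. hs n \<in> Bb) \<Longrightarrow> wconv hs (\<lambda>x. 0) \<Longrightarrow> wconv (\<lambda>n. Pn n (hs n)) (\<lambda>x. 0)"
  shows "wconv (\<lambda>n. contraction_fixpoint (Pn n) f) (contraction_fixpoint P f)"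
proof -
  define v where "v = contraction_fixpoint P f"
  define vn where "vn n = contraction_fixpoint (Pn n) f" for n
  have v: "v \<in> Bb" "v = (\<lambda>x. f x + P v x)"
    unfolding v_def by (rule contraction_fixpoint[OF P f])+
  have vn: "vn n \<in> Bb" "vn n = (\<lambda>x. f x + Pn n (vn n) x)" for n
    unfolding vn_def by (rule contraction_fixpoint[OF Pn f])+
  define e where "e n x = Pn n v x - P v x" for n x
  define w where "w n x = vn n x - v x" for n x
  have "wconv w (\<lambda>x. 0)"
  proof (rule wconv_null_contraction_solution[OF Pn _ _ _ _ _ conv_null])
    show "e n \<in> Bb" for n
      unfolding e_def[abs_def] by (intro Bb_diff contraction_Bb[OF Pn] contraction_Bb[OF P] v)
    show "wconv e (\<lambda>x. 0)"
      using wconv_diff[OF conv_fixpoint wconv_const[OF contraction_Bb[OF P v(1)]]]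
      unfolding e_def[abs_def] v_def by simp
    show "w n \<in> Bb" for n
      unfolding w_def[abs_def] by (rule Bb_diff[OF vn(1) v(1)])
    show "\<bar>w n x\<bar> \<le> supn f / (1 - q) + supn v" for n x
      unfolding w_def
      using abs_contraction_fixpoint_le[OF Pn[of n] f vn(1)[of n] vn(2)[of n], where x=x] abs_le_supn[OF v(1), of x]
      by linarith
    have "Pn n (w n) = (\<lambda>x. Pn n (vn n) x - Pn n v x)" for n
      unfolding w_def[abs_def] by (rule contraction_diff[OF Pn vn(1) v(1)])
    then show "w n = (\<lambda>x. e n x + Pn n (w n) x)" for n
      unfolding e_def w_def fun_eq_iff by (subst (1) vn(2), subst (1) v(2)) (simp add: algebra_simps)
  qed
  then have "(\<lambda>n. vn n x) \<longlonglongrightarrow> v x" for x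
    using tendsto_add[OF _ tendsto_const, of "\<lambda>n. w n x" 0 sequentially "v x"]
    unfolding wconv_def by (simp add: w_def)
  moreover have "\<bar>vn n x\<bar> \<le> supn f / (1 - q)" for n x
    by (rule abs_contraction_fixpoint_le[OF Pn f vn])
  ultimately show ?thesis
    unfolding wconv_def vn_def v_def by blast
qed

section \<open>The Laplace transform of a strong Feller kernel semigroup\<close>

lemma laplace_eq_integral:
  "laplace T l f = (\<lambda>x. \<integral>s. indicator {0<..} s * (exp (- l * s) * T s f x) \<partial>lborel)"
  unfolding laplace_def set_lebesgue_integral_def by simp

locale strong_Feller_kernel_semigroup =
  fixes T :: "real \<Rightarrow> ('a::second_countable_topology \<Rightarrow> real) \<Rightarrow> ('a \<Rightarrow> real)" and M \<omega> :: real
  assumes kernel_semigroup: "kernel_semigroup M \<omega> T"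
    and strong_Feller: "strong_Feller_semigroup T"
begin

definition \<omega>\<^sub>0 :: real where "\<omega>\<^sub>0 = max \<omega> 0"

definition orbit :: "('a \<Rightarrow> real) \<Rightarrow> 'a \<Rightarrow> real \<Rightarrow> real" where
  "orbit f x s = indicator {0<..} s * T s f x"

lemma \<omega>\<^sub>0_nonneg: "0 \<le> \<omega>\<^sub>0" and \<omega>_le_\<omega>\<^sub>0: "\<omega> \<le> \<omega>\<^sub>0"
  unfolding \<omega>\<^sub>0_def by simp_all

lemma kernel_op_T: "t > 0 \<Longrightarrow> kernel_op (T t)"
  using kernel_semigroup unfolding kernel_semigroup_def by auto

lemma T_add: "t > 0 \<Longrightarrow> s > 0 \<Longrightarrow> f \<in> Bb \<Longrightarrow> T (t + s) f = T t (T s f)"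
  using kernel_semigroup unfolding kernel_semigroup_def by auto

lemma abs_T_le: "t > 0 \<Longrightarrow> f \<in> Bb \<Longrightarrow> \<bar>T t f x\<bar> \<le> M * exp (\<omega> * t) * supn f"
  using kernel_semigroup unfolding kernel_semigroup_def op_bound_def by auto

lemma T_Bb: "t > 0 \<Longrightarrow> f \<in> Bb \<Longrightarrow> T t f \<in> Bb"
  using strong_Feller unfolding strong_Feller_semigroup_def Cb_def Bb_def
  by (auto intro: borel_measurable_continuous_onI)

lemma M_nonneg: "M \<ge> 0"
proof -
  have "0 \<le> \<bar>T 1 (\<lambda>x. 1) undefined\<bar>" by simp
  also have "\<dots> \<le> M * exp (\<omega> * 1)"
    using abs_T_le[of 1 "\<lambda>x. 1" undefined] Bb_const[of 1] by (simp add: supn_const)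
  finally show ?thesis by (simp add: zero_le_mult_iff)
qed

lemma abs_T_le_\<omega>\<^sub>0: "t > 0 \<Longrightarrow> f \<in> Bb \<Longrightarrow> \<bar>T t f x\<bar> \<le> M * supn f * exp (\<omega>\<^sub>0 * t)"
proof -
  assume t: "t > 0" and f: "f \<in> Bb"
  have "\<bar>T t f x\<bar> \<le> M * exp (\<omega> * t) * supn f" by (rule abs_T_le[OF t f])
  also have "\<dots> \<le> M * exp (\<omega>\<^sub>0 * t) * supn f"
    using t M_nonneg supn_nonneg[OF f] \<omega>_le_\<omega>\<^sub>0
    by (intro mult_right_mono mult_left_mono) auto
  finally show ?thesis by (simp add: algebra_simps)
qed

lemma T_measurable:
  assumes f: "f \<in> Bb"
  shows "(\<lambda>p. indicator {0<..} (fst p) * T (fst p) f (snd p)) \<in> borel_measurable (lborel \<Otimes>\<^sub>M (borel :: 'a measure))"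
proof -
  have m: "(\<lambda>p. T (fst p) f (snd p)) \<in> borel_measurable (restrict_space (borel :: (real \<times> 'a) measure) ({0<..} \<times> UNIV))"
    using kernel_semigroup f unfolding kernel_semigroup_def by auto
  have o: "({0<..} \<times> UNIV) \<inter> space (borel :: (real \<times> 'a) measure) \<in> sets borel"
    by (auto intro!: borel_open open_Times)
  have "(\<lambda>p. indicator ({0<..} \<times> UNIV) p *\<^sub>R T (fst p) f (snd p)) \<in> borel_measurable (borel :: (real \<times> 'a) measure)"
    using borel_measurable_restrict_space_iff[OF o, THEN iffD1, OF m] by simp
  moreover have "(\<lambda>p. indicator ({0<..} \<times> UNIV) p *\<^sub>R T (fst p) f (snd p)) = (\<lambda>p. indicator {0<..} (fst p) * T (fst p) f (snd p))"
    by (auto simp: indicator_def fun_eq_iff)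
  ultimately have "(\<lambda>p. indicator {0<..} (fst p) * T (fst p) f (snd p)) \<in> borel_measurable (borel \<Otimes>\<^sub>M (borel :: 'a measure))"
    by (simp add: borel_prod)
  moreover have "measurable (lborel \<Otimes>\<^sub>M (borel :: 'a measure)) (borel :: real measure) = measurable (borel \<Otimes>\<^sub>M borel) borel"
    by (rule measurable_cong_sets[OF sets_pair_measure_cong[OF sets_lborel refl] refl])
  ultimately show ?thesis by simp
qed

lemma exp_bounded_orbit:
  assumes f: "f \<in> Bb" and l: "l > \<omega>\<^sub>0"
  shows "exp_bounded (orbit f x) (M * supn f) \<omega>\<^sub>0 l"
proof
  have "(\<lambda>s. (s, x)) \<in> measurable lborel (lborel \<Otimes>\<^sub>M (borel :: 'a measure))"
    by measurable
  from measurable_compose[OF this T_measurable[OF f]]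
  show "orbit f x \<in> borel_measurable borel"
    unfolding orbit_def[abs_def] by simp
  show "\<bar>orbit f x s\<bar> \<le> M * supn f * exp (\<omega>\<^sub>0 * s)" if "s > 0" for s
    unfolding orbit_def using that abs_T_le_\<omega>\<^sub>0[OF that f, of x] by simp
qed (use l \<omega>\<^sub>0_nonneg in auto)

lemma laplace_eq_tail: "laplace T l f x = laplace_tail (orbit f x) l 0"
  unfolding laplace_eq_integral laplace_tail_def orbit_def
  by (intro Bochner_Integration.integral_cong refl) (auto simp: indicator_def)

lemma integrable_laplace_integrand:
  assumes "f \<in> Bb" "l > \<omega>\<^sub>0"
  shows "integrable lborel (\<lambda>s. indicator {0<..} s * (exp (- l * s) * T s f x))"
proof -
  interpret exp_bounded "orbit f x" "M * supn f" \<omega>\<^sub>0 l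
    by (rule exp_bounded_orbit[OF assms])
  have "(\<lambda>s. indicator {0<..} s * (exp (- l * s) * orbit f x s)) = (\<lambda>s. indicator {0<..} s * (exp (- l * s) * T s f x))"
    unfolding orbit_def by (auto simp: indicator_def fun_eq_iff)
  then show ?thesis
    using integrable_tail[of 0] by simp
qed

lemma abs_laplace_le:
  assumes "f \<in> Bb" "l > \<omega>\<^sub>0"
  shows "\<bar>laplace T l f x\<bar> \<le> M * supn f / (l - \<omega>\<^sub>0)"
proof -
  interpret exp_bounded "orbit f x" "M * supn f" \<omega>\<^sub>0 l
    by (rule exp_bounded_orbit[OF assms])
  show ?thesis
    unfolding laplace_eq_tail using abs_laplace_tail_le[of 0] by simp
qed

lemma laplace_measurable:
  assumes "f \<in> Bb"
  shows "laplace T l f \<in> borel_measurable borel"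
proof -
  have "(\<lambda>q. (\<lambda>p. indicator {0<..} (fst p) * T (fst p) f (snd p)) ((\<lambda>(x, y). (y, x)) q))
      \<in> borel_measurable ((borel :: 'a measure) \<Otimes>\<^sub>M lborel)"
    by (rule measurable_compose[OF measurable_pair_swap' T_measurable[OF assms]])
  then have [measurable]: "(\<lambda>(x, s). indicator {0<..} s * T s f x) \<in> borel_measurable ((borel :: 'a measure) \<Otimes>\<^sub>M lborel)"
    by (simp add: case_prod_beta')
  have "(\<lambda>(x, s). indicator {0<..} s * (exp (- l * s) * T s f x))
      = (\<lambda>(x, s). exp (- l * s) * (\<lambda>(x, s). indicator {0<..} s * T s f x) (x, s))"
    by (auto simp: fun_eq_iff)
  also have "\<dots> \<in> borel_measurable ((borel :: 'a measure) \<Otimes>\<^sub>M lborel)"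
    by measurable
  finally have "(\<lambda>(x, s). indicator {0<..} s * (exp (- l * s) * T s f x)) \<in> borel_measurable ((borel :: 'a measure) \<Otimes>\<^sub>M lborel)" .
  then show ?thesis
    unfolding laplace_eq_integral by (rule lborel.borel_measurable_lebesgue_integral)
qed

lemma laplace_Bb: "f \<in> Bb \<Longrightarrow> l > \<omega>\<^sub>0 \<Longrightarrow> laplace T l f \<in> Bb"
  by (rule BbI[OF laplace_measurable abs_laplace_le])

lemma laplace_add:
  assumes f: "f \<in> Bb" and g: "g \<in> Bb" and l: "l > \<omega>\<^sub>0"
  shows "laplace T l (\<lambda>x. f x + g x) = (\<lambda>x. laplace T l f x + laplace T l g x)"
proof
  fix x
  have "indicator {0<..} s * (exp (- l * s) * T s (\<lambda>x. f x + g x) x)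
      = indicator {0<..} s * (exp (- l * s) * T s f x) + indicator {0<..} s * (exp (- l * s) * T s g x)" for s
    by (cases "s > 0") (auto simp: kernel_op_add[OF kernel_op_T f g] algebra_simps)
  then show "laplace T l (\<lambda>x. f x + g x) x = laplace T l f x + laplace T l g x"
    unfolding laplace_eq_integral
    using integrable_laplace_integrand[OF f l] integrable_laplace_integrand[OF g l] by simp
qed

lemma laplace_cmult:
  assumes f: "f \<in> Bb"
  shows "laplace T l (\<lambda>x. c * f x) = (\<lambda>x. c * laplace T l f x)"
proof
  fix x
  have "indicator {0<..} s * (exp (- l * s) * T s (\<lambda>x. c * f x) x)
      = c * (indicator {0<..} s * (exp (- l * s) * T s f x))" for s
    by (cases "s > 0") (auto simp: kernel_op_cmult[OF kernel_op_T f] algebra_simps)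
  then have "laplace T l (\<lambda>x. c * f x) x = (\<integral>s. c * (indicator {0<..} s * (exp (- l * s) * T s f x)) \<partial>lborel)"
    by (simp only: laplace_eq_integral)
  then show "laplace T l (\<lambda>x. c * f x) x = c * laplace T l f x"
    by (simp add: laplace_eq_integral)
qed

lemma laplace_diff:
  assumes "f \<in> Bb" "g \<in> Bb" "l > \<omega>\<^sub>0"
  shows "laplace T l (\<lambda>x. f x - g x) = (\<lambda>x. laplace T l f x - laplace T l g x)"
  using laplace_add[OF assms(1) Bb_cmult[OF assms(2)] assms(3), of "-1"] laplace_cmult[OF assms(2), of l "-1"]
  by simp

lemma abs_laplace_integrand_le:
  assumes "f \<in> Bb"
  shows "\<bar>indicator {0<..} s * (exp (- l * s) * T s f y)\<bar> \<le> M * supn f * (indicator {0<..} s * exp (- (l - \<omega>\<^sub>0) * s))"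
proof (cases "s > 0")
  case True
  then have "exp (- l * s) * \<bar>T s f y\<bar> \<le> exp (- l * s) * (M * supn f * exp (\<omega>\<^sub>0 * s))"
    using abs_T_le_\<omega>\<^sub>0[OF True assms, of y] by (simp add: mult.assoc)
  also have "\<dots> = M * supn f * exp (- (l - \<omega>\<^sub>0) * s)"
    by (simp add: algebra_simps flip: exp_add)
  finally show ?thesis
    using True by (simp add: abs_mult)
qed simp

lemma laplace_dominated_convergence:
  assumes fs: "\<And>n. fs n \<in> Bb" and f: "f \<in> Bb" and bound: "\<And>n y. \<bar>fs n y\<bar> \<le> D"
    and lim: "\<And>y. (\<lambda>n. fs n y) \<longlonglongrightarrow> f y" and l: "l > \<omega>\<^sub>0"
  shows "(\<lambda>n. laplace T l (fs n) x) \<longlonglongrightarrow> laplace T l f x"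
  unfolding laplace_eq_integral
proof (rule integral_dominated_convergence[where w="\<lambda>s. M * D * (indicator {0<..} s * exp (- (l - \<omega>\<^sub>0) * s))"])
  show "integrable lborel (\<lambda>s. M * D * (indicator {0<..} s * exp (- (l - \<omega>\<^sub>0) * s)))"
    using integrable_exp_neg_Ioi[of "l - \<omega>\<^sub>0" 0] l by auto
  show "AE s in lborel. (\<lambda>n. indicator {0<..} s * (exp (- l * s) * T s (fs n) x))
      \<longlonglongrightarrow> indicator {0<..} s * (exp (- l * s) * T s f x)"
  proof (rule AE_I2)
    fix s :: real
    show "(\<lambda>n. indicator {0<..} s * (exp (- l * s) * T s (fs n) x)) \<longlonglongrightarrow> indicator {0<..} s * (exp (- l * s) * T s f x)"
    proof (cases "s > 0")
      case True
      then show ?thesis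
        using kernel_op_dominated_convergence[OF kernel_op_T[OF True] fs f bound lim]
        by (intro tendsto_mult tendsto_const)
    qed simp
  qed
  show "AE s in lborel. norm (indicator {0<..} s * (exp (- l * s) * T s (fs n) x))
      \<le> M * D * (indicator {0<..} s * exp (- (l - \<omega>\<^sub>0) * s))" for n
  proof (rule AE_I2)
    fix s
    have "M * supn (fs n) \<le> M * D"
      using supn_le[OF bound] M_nonneg by (intro mult_left_mono)
    then have "M * supn (fs n) * (indicator {0<..} s * exp (- (l - \<omega>\<^sub>0) * s)) \<le> M * D * (indicator {0<..} s * exp (- (l - \<omega>\<^sub>0) * s))"
      by (intro mult_right_mono) auto
    then show "norm (indicator {0<..} s * (exp (- l * s) * T s (fs n) x)) \<le> M * D * (indicator {0<..} s * exp (- (l - \<omega>\<^sub>0) * s))"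
      using abs_laplace_integrand_le[OF fs[of n], where s=s and l=l and y=x] by simp
  qed
qed (use integrable_laplace_integrand[OF f l] integrable_laplace_integrand[OF fs l] in auto)

lemma T_laplace:
  assumes t: "t > 0" and f: "f \<in> Bb" and l: "l > \<omega>\<^sub>0"
  shows "T t (laplace T l f) x = exp (l * t) * laplace_tail (orbit f x) l t"
proof -
  interpret exp_bounded "orbit f x" "M * supn f" \<omega>\<^sub>0 l
    by (rule exp_bounded_orbit[OF f l])
  define F where "F s y = indicator {0<..} s * (exp (- l * s) * T s f y)" for s y
  have F_pos: "F s = (\<lambda>y. exp (- l * s) * T s f y)" if "s > 0" for s
    using that by (auto simp: F_def fun_eq_iff)
  have F_nonpos: "F s = (\<lambda>y. 0)" if "\<not> s > 0" for s
    using that by (auto simp: F_def fun_eq_iff)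
  have "T t (\<lambda>y. \<integral>s. F s y \<partial>lborel) x = (\<integral>s. T t (F s) x \<partial>lborel)"
  proof (rule kernel_op_integral_commute[OF kernel_op_T[OF t]])
    have "(\<lambda>p. exp (- l * fst p) * (indicator {0<..} (fst p) * T (fst p) f (snd p)))
        \<in> borel_measurable (lborel \<Otimes>\<^sub>M (borel :: 'a measure))"
      using T_measurable[OF f] by measurable
    then show "case_prod F \<in> borel_measurable (lborel \<Otimes>\<^sub>M borel)"
      by (simp add: F_def case_prod_beta' mult.left_commute)
    show "\<bar>F s y\<bar> \<le> M * supn f * (indicator {0<..} s * exp (- (l - \<omega>\<^sub>0) * s))" for s y
      unfolding F_def by (rule abs_laplace_integrand_le[OF f])
    show "integrable lborel (\<lambda>s. M * supn f * (indicator {0<..} s * exp (- (l - \<omega>\<^sub>0) * s)))"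
      using integrable_exp_neg_Ioi[of "l - \<omega>\<^sub>0" 0] l by auto
    show "F s \<in> Bb" for s
      using F_pos[of s] F_nonpos[of s] Bb_cmult[OF T_Bb[OF _ f]] Bb_const by (cases "s > 0") auto
    show "(\<lambda>y. \<integral>s. F s y \<partial>lborel) \<in> Bb"
      using laplace_Bb[OF f l] unfolding F_def laplace_eq_integral .
  qed
  also have "T t (F s) x = indicator {0<..} s * (exp (- l * s) * orbit f x (t + s))" for s
  proof (cases "s > 0")
    case True
    then have "T t (F s) x = exp (- l * s) * T t (T s f) x"
      using kernel_op_cmult[OF kernel_op_T[OF t] T_Bb[OF True f]] by (simp add: F_pos[OF True])
    then show ?thesis
      using T_add[OF t True f] True t by (simp add: orbit_def)
  qed (simp add: F_nonpos kernel_op_zero[OF kernel_op_T[OF t]])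
  then have "(\<integral>s. T t (F s) x \<partial>lborel) = exp (l * t) * laplace_tail (orbit f x) l t"
    using laplace_tail_shift[of t] by simp
  finally show ?thesis
    by (simp add: F_def laplace_eq_integral)
qed

lemma laplace_full_gen:
  assumes f: "f \<in> Bb" and l: "l > \<omega>\<^sub>0"
  shows "(laplace T l f, \<lambda>x. l * laplace T l f x - f x) \<in> full_gen T"
  unfolding full_gen_def
proof (intro CollectI conjI case_prodI allI impI)
  show Rf: "laplace T l f \<in> Bb"
    by (rule laplace_Bb[OF f l])
  show "(\<lambda>x. l * laplace T l f x - f x) \<in> Bb"
    by (rule Bb_diff[OF Bb_cmult[OF Rf] f])
  fix t :: real and x assume t: "t > 0"
  interpret exp_bounded "orbit f x" "M * supn f" \<omega>\<^sub>0 l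
    by (rule exp_bounded_orbit[OF f l])
  have "T s (\<lambda>x. l * laplace T l f x - f x) x = l * exp (l * s) * J s - orbit f x s" if s: "s > 0" for s
    using kernel_op_diff[OF kernel_op_T[OF s] Bb_cmult[OF Rf] f] kernel_op_cmult[OF kernel_op_T[OF s] Rf]
      T_laplace[OF s f l] s
    by (simp add: orbit_def)
  then have "(\<integral>s. indicator {0<..t} s * (l * exp (l * s) * J s - orbit f x s) \<partial>lborel)
      = (\<integral>s. indicator {0<..t} s * T s (\<lambda>x. l * laplace T l f x - f x) x \<partial>lborel)"
    by (intro Bochner_Integration.integral_cong refl) (auto simp: indicator_def)
  then show "T t (laplace T l f) x - laplace T l f x = (LINT s:{0<..t}|lborel. T s (\<lambda>x. l * laplace T l f x - f x) x)"
    using T_laplace[OF t f l] laplace_eq_tail laplace_tail_exp_diff[of t] t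
    by (simp add: set_lebesgue_integral_def)
qed

lemma laplace_full_gen_inverse:
  assumes ug: "(u, g) \<in> full_gen T" and l: "l > \<omega>\<^sub>0"
  shows "laplace T l (\<lambda>x. l * u x - g x) = u"
proof
  fix x
  have u: "u \<in> Bb" and g: "g \<in> Bb"
    and evolution: "\<And>t. t > 0 \<Longrightarrow> T t u x - u x = (\<integral>s. indicator {0<..t} s * T s g x \<partial>lborel)"
    using ug unfolding full_gen_def set_lebesgue_integral_def by auto
  interpret exp_bounded "orbit g x" "M * supn g" \<omega>\<^sub>0 l
    by (rule exp_bounded_orbit[OF g l])
  define \<Gamma> where "\<Gamma> t = (\<integral>s. indicator {0<..t} s * orbit g x s \<partial>lborel)" for t
  have split: "indicator {0<..} t * (exp (- l * t) * T t u x)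
      = u x * (indicator {0<..} t * exp (- l * t)) + indicator {0<..} t * (exp (- l * t) * \<Gamma> t)" for t
  proof (cases "t > 0")
    case True
    have "\<Gamma> t = (\<integral>s. indicator {0<..t} s * T s g x \<partial>lborel)"
      unfolding \<Gamma>_def orbit_def by (intro Bochner_Integration.integral_cong refl) (auto simp: indicator_def)
    then show ?thesis
      using evolution[OF True] True by (simp add: algebra_simps)
  qed simp
  have exp_int: "integrable lborel (\<lambda>t. u x * (indicator {0<..} t * exp (- l * t)))"
    using integrable_exp_neg_Ioi[OF l_pos, of 0] by simp
  have "(\<lambda>t. indicator {0<..} t * (exp (- l * t) * \<Gamma> t))
      = (\<lambda>t. indicator {0<..} t * (exp (- l * t) * T t u x) - u x * (indicator {0<..} t * exp (- l * t)))"
    using split by (simp add: fun_eq_iff)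
  then have \<Gamma>_int: "integrable lborel (\<lambda>t. indicator {0<..} t * (exp (- l * t) * \<Gamma> t))"
    using integrable_laplace_integrand[OF u l, of x] exp_int by simp
  have "laplace T l u x
      = u x * (\<integral>t. indicator {0<..} t * exp (- l * t) \<partial>lborel) + (\<integral>t. indicator {0<..} t * (exp (- l * t) * \<Gamma> t) \<partial>lborel)"
    unfolding laplace_eq_integral split using exp_int \<Gamma>_int by simp
  then have "l * laplace T l u x = u x + laplace T l g x"
    using integral_exp_neg_Ioi[OF l_pos, of 0] laplace_primitive l_pos
    by (simp add: laplace_eq_tail \<Gamma>_def distrib_left)
  then show "laplace T l (\<lambda>x. l * u x - g x) x = u x"
    using laplace_diff[OF Bb_cmult[OF u] g l] laplace_cmult[OF u] by simp
qed

lemma resolvent_identity: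
  assumes h: "h \<in> Bb" and l: "l > \<omega>\<^sub>0" and m: "m > \<omega>\<^sub>0"
  shows "laplace T l h = laplace T m (\<lambda>x. h x + (m - l) * laplace T l h x)"
proof -
  have "laplace T m (\<lambda>x. m * laplace T l h x - (l * laplace T l h x - h x)) = laplace T l h"
    by (rule laplace_full_gen_inverse[OF laplace_full_gen[OF h l] m])
  moreover have "(\<lambda>x. m * laplace T l h x - (l * laplace T l h x - h x)) = (\<lambda>x. h x + (m - l) * laplace T l h x)"
    by (auto simp: algebra_simps)
  ultimately show ?thesis by simp
qed

lemma wconv_laplace:
  assumes hs: "\<And>n. hs n \<in> Bb" and h: "h \<in> Bb" and conv: "wconv hs h" and l: "l > \<omega>\<^sub>0"
  shows "wconv (\<lambda>n. laplace T l (hs n)) (laplace T l h)"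
proof -
  obtain C where C: "\<And>n x. \<bar>hs n x\<bar> \<le> C" and lim: "\<And>x. (\<lambda>n. hs n x) \<longlonglongrightarrow> h x"
    using conv unfolding wconv_def by blast
  have "\<bar>laplace T l (hs n) x\<bar> \<le> M * C / (l - \<omega>\<^sub>0)" for n x
  proof -
    have "\<bar>laplace T l (hs n) x\<bar> \<le> M * supn (hs n) / (l - \<omega>\<^sub>0)"
      by (rule abs_laplace_le[OF hs l])
    also have "\<dots> \<le> M * C / (l - \<omega>\<^sub>0)"
      using l M_nonneg supn_le[OF C] by (intro divide_right_mono mult_left_mono) auto
    finally show ?thesis .
  qed
  then show ?thesis
    unfolding wconv_def using laplace_dominated_convergence[OF hs h C lim l] by blast
qed

end

section \<open>Perturbed resolvents\<close>

lemma admissible_pertD: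
  assumes "admissible_pert T \<omega> D Bop"
  shows "Domain (full_gen T) \<subseteq> D" "\<And>f. f \<in> D \<Longrightarrow> Bop f \<in> Bb"
    "\<And>f g. f \<in> D \<Longrightarrow> g \<in> D \<Longrightarrow> Bop (\<lambda>x. f x + g x) = (\<lambda>x. Bop f x + Bop g x)"
    "\<And>f c. f \<in> D \<Longrightarrow> Bop (\<lambda>x. c * f x) = (\<lambda>x. c * Bop f x)"
    "\<And>f c. f \<in> D \<Longrightarrow> (\<lambda>x. c * f x) \<in> D"
    "\<And>l. l > \<omega> \<Longrightarrow> kernel_op (\<lambda>f. Bop (laplace T l f))"
  using assms unfolding admissible_pert_def by blast+

context strong_Feller_kernel_semigroup
begin

lemma laplace_in_domain:
  assumes A: "admissible_pert T \<omega> D Bop" and h: "h \<in> Bb" and l: "l > \<omega>\<^sub>0"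
  shows "laplace T l h \<in> D"
  using laplace_full_gen[OF h l] admissible_pertD(1)[OF A] by blast

lemma kernel_contraction_perturbation:
  assumes A: "admissible_pert T \<omega> D Bop" and l: "l > \<omega>\<^sub>0"
    and bound: "op_bound (\<lambda>h. Bop (laplace T l h)) q" and q: "q < 1"
  shows "kernel_contraction q (\<lambda>h. Bop (laplace T l h))"
  unfolding kernel_contraction_def
  using admissible_pertD(6)[OF A] admissible_pertD(2)[OF A laplace_in_domain[OF A _ l]] \<omega>_le_\<omega>\<^sub>0 l bound q
  by auto

lemma perturbation_resolvent_identity:
  assumes A: "admissible_pert T \<omega> D Bop" and h: "h \<in> Bb" and l: "l > \<omega>\<^sub>0" and m: "m > \<omega>\<^sub>0"
  shows "Bop (laplace T l h) = (\<lambda>x. Bop (laplace T m h) x + (m - l) * Bop (laplace T m (laplace T l h)) x)"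
proof -
  have Rl: "laplace T l h \<in> Bb"
    by (rule laplace_Bb[OF h l])
  have R_eq: "laplace T l h = (\<lambda>x. laplace T m h x + (m - l) * laplace T m (laplace T l h) x)"
    using resolvent_identity[OF h l m] laplace_add[OF h Bb_cmult[OF Rl] m] laplace_cmult[OF Rl] by simp
  have D: "laplace T m h \<in> D" "laplace T m (laplace T l h) \<in> D"
    using laplace_in_domain[OF A h m] laplace_in_domain[OF A Rl m] .
  have "Bop (laplace T l h) = (\<lambda>x. Bop (laplace T m h) x + Bop (\<lambda>x. (m - l) * laplace T m (laplace T l h) x) x)"
    by (subst R_eq, rule admissible_pertD(3)[OF A D(1) admissible_pertD(5)[OF A D(2)]])
  then show ?thesis
    unfolding admissible_pertD(4)[OF A D(2)] .
qed

text \<open>Hypotheses (2) and (3) hold only for \<lambda> beyond a threshold depending on h; the resolvent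
  identity transfers them to every \<lambda> above the growth bound of the semigroup.\<close>

lemma wconv_perturbation_laplace:
  assumes A: "admissible_pert T \<omega> D B" and An: "\<And>n. admissible_pert T \<omega> (Dn n) (Bn n)"
    and conv: "\<forall>h\<in>Bb. \<exists>l0. \<forall>l\<ge>l0. l > \<omega> \<longrightarrow> wconv (\<lambda>n. Bn n (laplace T l h)) (B (laplace T l h))"
    and h: "h \<in> Bb" and l: "l > \<omega>\<^sub>0"
  shows "wconv (\<lambda>n. Bn n (laplace T l h)) (B (laplace T l h))"
proof -
  have Rl: "laplace T l h \<in> Bb"
    by (rule laplace_Bb[OF h l])
  obtain l1 where l1: "\<forall>m\<ge>l1. m > \<omega> \<longrightarrow> wconv (\<lambda>n. Bn n (laplace T m h)) (B (laplace T m h))"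
    using conv h by blast
  obtain l2 where l2: "\<forall>m\<ge>l2. m > \<omega> \<longrightarrow>
      wconv (\<lambda>n. Bn n (laplace T m (laplace T l h))) (B (laplace T m (laplace T l h)))"
    using conv Rl by blast
  define m where "m = max (max l1 l2) (l + 1)"
  have m: "m > \<omega>\<^sub>0" "m > \<omega>" "m \<ge> l1" "m \<ge> l2"
    using l \<omega>_le_\<omega>\<^sub>0 unfolding m_def by auto
  have "wconv (\<lambda>n x. Bn n (laplace T m h) x + (m - l) * Bn n (laplace T m (laplace T l h)) x)
      (\<lambda>x. B (laplace T m h) x + (m - l) * B (laplace T m (laplace T l h)) x)"
    using l1 l2 m by (intro wconv_add wconv_cmult) auto
  then show ?thesis
    unfolding perturbation_resolvent_identity[OF A h l m(1)] perturbation_resolvent_identity[OF An h l m(1)] .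
qed

lemma wconv_perturbation_laplace_null:
  assumes An: "\<And>n. admissible_pert T \<omega> (Dn n) (Bn n)"
    and conv: "\<forall>hs. (\<forall>n. hs n \<in> Bb) \<and> wconv hs (\<lambda>x. 0) \<longrightarrow>
                 (\<exists>l0. \<forall>l\<ge>l0. l > \<omega> \<longrightarrow> wconv (\<lambda>n. Bn n (laplace T l (hs n))) (\<lambda>x. 0))"
    and hs: "\<forall>n. hs n \<in> Bb" and null: "wconv hs (\<lambda>x. 0)" and l: "l > \<omega>\<^sub>0"
  shows "wconv (\<lambda>n. Bn n (laplace T l (hs n))) (\<lambda>x. 0)"
proof -
  have Rl: "\<forall>n. laplace T l (hs n) \<in> Bb"
    using laplace_Bb hs l by blast
  have "wconv (\<lambda>n. laplace T l (hs n)) (laplace T l (\<lambda>x. 0))"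
    using hs null l Bb_const by (intro wconv_laplace) auto
  then have Rl_null: "wconv (\<lambda>n. laplace T l (hs n)) (\<lambda>x. 0)"
    using laplace_cmult[OF Bb_const, of l 0 0] by simp
  obtain l1 where l1: "\<forall>m\<ge>l1. m > \<omega> \<longrightarrow> wconv (\<lambda>n. Bn n (laplace T m (hs n))) (\<lambda>x. 0)"
    using conv[rule_format, OF conjI[OF hs null]] by blast
  obtain l2 where l2: "\<forall>m\<ge>l2. m > \<omega> \<longrightarrow> wconv (\<lambda>n. Bn n (laplace T m (laplace T l (hs n)))) (\<lambda>x. 0)"
    using conv[rule_format, OF conjI[OF Rl Rl_null]] by blast
  define m where "m = max (max l1 l2) (l + 1)"
  have m: "m > \<omega>\<^sub>0" "m > \<omega>" "m \<ge> l1" "m \<ge> l2"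
    using l \<omega>_le_\<omega>\<^sub>0 unfolding m_def by auto
  have "wconv (\<lambda>n x. Bn n (laplace T m (hs n)) x + (m - l) * Bn n (laplace T m (laplace T l (hs n))) x)
      (\<lambda>x. 0 + (m - l) * 0)"
    using l1 l2 m by (intro wconv_add wconv_cmult) auto
  then show ?thesis
    using perturbation_resolvent_identity[OF An hs[rule_format] l m(1)] by simp
qed

lemma kernel_contraction_perturbation_limit:
  assumes A: "admissible_pert T \<omega> D B" and l: "l > \<omega>\<^sub>0"
    and Pn: "\<And>n. kernel_contraction q (\<lambda>h. Bn n (laplace T l h))"
    and conv: "\<And>h. h \<in> Bb \<Longrightarrow> wconv (\<lambda>n. Bn n (laplace T l h)) (B (laplace T l h))"
  shows "kernel_contraction q (\<lambda>h. B (laplace T l h))"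
  using admissible_pertD(6)[OF A] admissible_pertD(2)[OF A laplace_in_domain[OF A _ l]] l \<omega>_le_\<omega>\<^sub>0
    conv[unfolded wconv_def]
  by (intro kernel_contraction_limit[where Pn="\<lambda>n h. Bn n (laplace T l h)", OF Pn]) auto

lemma pert_res_rel_iff:
  assumes A: "admissible_pert T \<omega> D Bop" and l: "l > \<omega>\<^sub>0"
  shows "(f, u) \<in> pert_res_rel (full_gen T) Bop l \<longleftrightarrow>
    (\<exists>v\<in>Bb. v = (\<lambda>x. f x + Bop (laplace T l v) x) \<and> u = laplace T l v)"
proof
  assume "(f, u) \<in> pert_res_rel (full_gen T) Bop l"
  then obtain g where ug: "(u, g) \<in> full_gen T" and f_eq: "f = (\<lambda>x. l * u x - (g x + Bop u x))"
    unfolding pert_res_rel_def by blast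
  have "u \<in> Bb" "g \<in> Bb"
    using ug unfolding full_gen_def by auto
  then have "(\<lambda>x. l * u x - g x) \<in> Bb"
    by (intro Bb_diff Bb_cmult)
  moreover have "laplace T l (\<lambda>x. l * u x - g x) = u"
    by (rule laplace_full_gen_inverse[OF ug l])
  ultimately show "\<exists>v\<in>Bb. v = (\<lambda>x. f x + Bop (laplace T l v) x) \<and> u = laplace T l v"
    using f_eq by (intro bexI[of _ "\<lambda>x. l * u x - g x"]) auto
next
  assume "\<exists>v\<in>Bb. v = (\<lambda>x. f x + Bop (laplace T l v) x) \<and> u = laplace T l v"
  then obtain v where v: "v \<in> Bb" and v_eq: "v = (\<lambda>x. f x + Bop (laplace T l v) x)" and u: "u = laplace T l v"
    by blast
  have "(u, \<lambda>x. l * u x - v x) \<in> full_gen T"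
    unfolding u by (rule laplace_full_gen[OF v l])
  moreover have "f = (\<lambda>x. l * u x - ((l * u x - v x) + Bop u x))"
  proof
    fix x
    have "v x = f x + Bop u x"
      unfolding u by (subst v_eq) simp
    then show "f x = l * u x - ((l * u x - v x) + Bop u x)"
      by simp
  qed
  ultimately show "(f, u) \<in> pert_res_rel (full_gen T) Bop l"
    unfolding pert_res_rel_def by (intro CollectI exI conjI) auto
qed

lemma pert_res_eq_laplace_fixpoint:
  assumes A: "admissible_pert T \<omega> D Bop" and l: "l > \<omega>\<^sub>0" and f: "f \<in> Bb"
    and P: "kernel_contraction q (\<lambda>h. Bop (laplace T l h))"
  shows "\<exists>!u. (f, u) \<in> pert_res_rel (full_gen T) Bop l"
    and "pert_res (full_gen T) Bop l f = laplace T l (contraction_fixpoint (\<lambda>h. Bop (laplace T l h)) f)"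
proof -
  define v where "v = contraction_fixpoint (\<lambda>h. Bop (laplace T l h)) f"
  have v: "v \<in> Bb" "v = (\<lambda>x. f x + Bop (laplace T l v) x)"
    unfolding v_def by (rule contraction_fixpoint[OF P f])+
  have solutions: "(f, u) \<in> pert_res_rel (full_gen T) Bop l \<longleftrightarrow> u = laplace T l v" for u
    unfolding pert_res_rel_iff[OF A l]
    using v contraction_fixpoint_eqI[OF P _ _ f] unfolding v_def by metis
  then show "\<exists>!u. (f, u) \<in> pert_res_rel (full_gen T) Bop l"
    by auto
  show "pert_res (full_gen T) Bop l f = laplace T l (contraction_fixpoint (\<lambda>h. Bop (laplace T l h)) f)"
    unfolding pert_res_def solutions v_def by simp
qed

end

theorem proposition5p2:
  fixes T :: "real \<Rightarrow> ('a::polish_space \<Rightarrow> real) \<Rightarrow> ('a \<Rightarrow> real)"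
    and M \<omega> :: real
    and DB :: "('a \<Rightarrow> real) set" and B :: "('a \<Rightarrow> real) \<Rightarrow> ('a \<Rightarrow> real)"
    and DBn :: "nat \<Rightarrow> ('a \<Rightarrow> real) set" and Bn :: "nat \<Rightarrow> ('a \<Rightarrow> real) \<Rightarrow> ('a \<Rightarrow> real)"
  assumes loc_compact: "locally_compact_space (euclidean :: 'a topology)"
    and semigroup: "kernel_semigroup M \<omega> T"
    and Cb_sg: "Cb_semigroup T"
    and strong_Feller: "strong_Feller_semigroup T"
    and B_adm: "admissible_pert T \<omega> DB B"
    and Bn_adm: "\<And>n. admissible_pert T \<omega> (DBn n) (Bn n)"
    and hyp1: "\<forall>\<epsilon>>0. \<exists>l0. \<forall>l\<ge>l0. l > \<omega> \<longrightarrow>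
                 (\<forall>n. op_bound (\<lambda>f. Bn n (laplace T l f)) \<epsilon>)"
    and hyp2: "\<forall>h\<in>Bb. \<exists>l0. \<forall>l\<ge>l0. l > \<omega> \<longrightarrow>
                 wconv (\<lambda>n. Bn n (laplace T l h)) (B (laplace T l h))"
    and hyp3: "\<forall>hs. (\<forall>n. hs n \<in> Bb) \<and> wconv hs (\<lambda>x. 0) \<longrightarrow>
                 (\<exists>l0. \<forall>l\<ge>l0. l > \<omega> \<longrightarrow>
                    wconv (\<lambda>n. Bn n (laplace T l (hs n))) (\<lambda>x. 0))"
  shows "\<exists>l0. \<forall>l\<ge>l0. \<forall>f\<in>Bb.
           (\<exists>!u. (f, u) \<in> pert_res_rel (full_gen T) B l) \<and>
           (\<forall>n. \<exists>!u. (f, u) \<in> pert_res_rel (full_gen T) (Bn n) l) \<and>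
           wconv (\<lambda>n. pert_res (full_gen T) (Bn n) l f) (pert_res (full_gen T) B l f)"
proof -
  interpret strong_Feller_kernel_semigroup T M \<omega>
    using semigroup strong_Feller by unfold_locales
  obtain l1 where l1: "\<forall>l\<ge>l1. l > \<omega> \<longrightarrow> (\<forall>n. op_bound (\<lambda>f. Bn n (laplace T l f)) (1/2))"
    using hyp1[rule_format, of "1/2"] by auto
  show ?thesis
  proof (intro exI[of _ "max l1 (\<omega>\<^sub>0 + 1)"] allI impI ballI)
    fix l :: real and f :: "'a \<Rightarrow> real" assume "max l1 (\<omega>\<^sub>0 + 1) \<le> l" and f: "f \<in> Bb"
    then have l: "l > \<omega>\<^sub>0" and bound: "\<And>n. op_bound (\<lambda>f. Bn n (laplace T l f)) (1/2)"
      using l1 \<omega>_le_\<omega>\<^sub>0 by auto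
    have Pn: "kernel_contraction (1/2) (\<lambda>h. Bn n (laplace T l h))" for n
      by (rule kernel_contraction_perturbation[OF Bn_adm l bound]) simp
    have conv: "wconv (\<lambda>n. Bn n (laplace T l h)) (B (laplace T l h))" if "h \<in> Bb" for h
      by (rule wconv_perturbation_laplace[OF B_adm Bn_adm hyp2 that l])
    have P: "kernel_contraction (1/2) (\<lambda>h. B (laplace T l h))"
      by (rule kernel_contraction_perturbation_limit[OF B_adm l Pn conv])
    have "wconv (\<lambda>n. contraction_fixpoint (\<lambda>h. Bn n (laplace T l h)) f) (contraction_fixpoint (\<lambda>h. B (laplace T l h)) f)"
      using wconv_perturbation_laplace_null[OF Bn_adm hyp3 _ _ l]
      by (intro wconv_contraction_fixpoint[OF Pn P f conv[OF contraction_fixpoint(1)[OF P f]]]) auto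
    then show "(\<exists>!u. (f, u) \<in> pert_res_rel (full_gen T) B l) \<and>
        (\<forall>n. \<exists>!u. (f, u) \<in> pert_res_rel (full_gen T) (Bn n) l) \<and>
        wconv (\<lambda>n. pert_res (full_gen T) (Bn n) l f) (pert_res (full_gen T) B l f)"
      using pert_res_eq_laplace_fixpoint[OF B_adm l f P] pert_res_eq_laplace_fixpoint[OF Bn_adm l f Pn]
        contraction_fixpoint(1)[OF Pn f] contraction_fixpoint(1)[OF P f]
      by (simp add: wconv_laplace l)
  qed
qed

end
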